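(* The involution $X\mapsto\overline X$ is, on the level of functions on $\mathrm{Spec}\,R$, complex conjugation: for every $X\in QH^*(G,\mathbb Z)$ and every point $p\in\mathrm{Spec}\,R$, one has $\overline X(p)=\overline{X(p)}$, the right-hand side being the complex conjugate of the complex number $X(p)$.
   Context: Let $0<k<n$ be integers, $l=n-k$, and $G=G(k,n)$ the Grassmannian of $k$-planes in $\mathbb C^n$. Schubert classes $S_\lambda$ of $G$ are indexed by Young diagrams $\lambda=(\lambda_1\ge\dots\ge\lambda_l\ge0)$ with $\lambda_1\le k$. $QH^*(G,\mathbb Z)$ denotes the small quantum cohomology ring of $G$ with the quantum parameter $q$ set equal to $1$, a free $\mathbb Z$-module with basis the Schubert classes, product denoted $*$. The operator $X\mapsto\overline X$ is defined on Schubert classes and extended $\mathbb Z$-linearly: for $\lambda$ let $d_\lambda$ be the largest $i$ with $\lambda_i\ge i$ ($0$ if none); then $\overline{S_\lambda}=S_\mu$ with $\mu_i=d_\lambda+k-\lambda_{d_\lambda-i+1}$ for $i\le d_\lambda$ and $\mu_i=d_\lambda-\lambda_{l-i+d_\lambda+1}$ for $i>d_\lambda$. Let $R=QH^*(G,\mathbb C)=QH^*(G,\mathbb Z)\otimes\mathbb C$. It is known that $R$ is a semisimple commutative $\mathbb C$-algebra, so $\mathrm{Spec}\,R$ is a finite set of reduced points and $R$ is identified with the algebra of $\mathbb C$-valued functions on $\mathrm{Spec}\,R$; each class $X$ thus gives a function $p\mapsto X(p)\in\mathbb C$, with $(X*Y)(p)=X(p)Y(p)$. *)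

theory Defs
  imports "HOL-Analysis.Analysis" "HOL-Combinatorics.Permutations"
begin

text \<open>Young diagrams \<open>\<lambda> = (\<lambda>_1 \<ge> ... \<ge> \<lambda>_l \<ge> 0)\<close> with \<open>\<lambda>_1 \<le> k\<close>, encoded as
  lists of length l; \<open>\<lambda>_i\<close> is \<open>lam ! (i - 1)\<close>.\<close>
definition ydiag :: "nat \<Rightarrow> nat \<Rightarrow> nat list set" where
  "ydiag k l = {lam. length lam = l \<and> sorted_wrt (\<ge>) lam \<and> (\<forall>x\<in>set lam. x \<le> k)}"

text \<open>Elements of the free module on the Schubert classes: coefficient functions
  (supported on \<open>ydiag k l\<close>). The Schubert class \<open>S_\<lambda>\<close>:\<close>
definition schub :: "nat list \<Rightarrow> nat list \<Rightarrow> 'a::zero_neq_one" where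
  "schub lam = (\<lambda>mu. if mu = lam then 1 else 0)"

definition supported :: "nat \<Rightarrow> nat \<Rightarrow> (nat list \<Rightarrow> 'a::zero) \<Rightarrow> bool" where
  "supported k l X \<longleftrightarrow> (\<forall>lam. lam \<notin> ydiag k l \<longrightarrow> X lam = 0)"

text \<open>Quantum Pieri rule (Bertram), q = 1: coefficient of \<open>S_\<mu>\<close> in \<open>S_(i) * S_\<lambda>\<close>,
  for \<open>0 \<le> i \<le> k\<close>, with n = k + l.\<close>
definition pieri_coeff :: "nat \<Rightarrow> nat \<Rightarrow> nat \<Rightarrow> nat list \<Rightarrow> nat list \<Rightarrow> bool" where
  "pieri_coeff k l i lam mu \<longleftrightarrow> mu \<in> ydiag k l \<and>
     ((sum_list mu = sum_list lam + i \<and> (\<forall>j<l. lam ! j \<le> mu ! j)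
         \<and> (\<forall>j. j + 1 < l \<longrightarrow> mu ! (j + 1) \<le> lam ! j))
    \<or> (sum_list mu + (k + l) = sum_list lam + i \<and> (\<forall>j<l. mu ! j + 1 \<le> lam ! j)
         \<and> (\<forall>j. j + 1 < l \<longrightarrow> lam ! (j + 1) \<le> mu ! j + 1)))"

text \<open>Multiplication by the special Schubert class \<open>S_(e)\<close> (zero unless \<open>0 \<le> e \<le> k\<close>).\<close>
definition special_op :: "nat \<Rightarrow> nat \<Rightarrow> int \<Rightarrow> (nat list \<Rightarrow> 'a::comm_ring_1) \<Rightarrow> nat list \<Rightarrow> 'a" where
  "special_op k l e Y = (\<lambda>mu. if 0 \<le> e \<and> e \<le> int k
      then (\<Sum>lam\<in>ydiag k l. if pieri_coeff k l (nat e) lam mu then Y lam else 0)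
      else 0)"

text \<open>Multiplication by \<open>S_\<lambda>\<close>, via the (quantum) Giambelli formula
  \<open>S_\<lambda> = det (S_(\<lambda>_i + j - i))_{1\<le>i,j\<le>l}\<close>.\<close>
definition giambelli_op :: "nat \<Rightarrow> nat \<Rightarrow> nat list \<Rightarrow> (nat list \<Rightarrow> 'a::comm_ring_1) \<Rightarrow> nat list \<Rightarrow> 'a" where
  "giambelli_op k l lam Y = (\<lambda>mu. \<Sum>w\<in>{w. w permutes {..<l}}.
      of_int (sign w) *
      foldr (\<lambda>i acc. special_op k l (int (lam ! i) + int (w i) - int i) acc) [0..<l] Y mu)"

text \<open>The quantum product \<open>*\<close> (q = 1) on \<open>QH^*(G(k,n))\<close>, l = n - k.\<close>
definition qprod :: "nat \<Rightarrow> nat \<Rightarrow> (nat list \<Rightarrow> 'a::comm_ring_1) \<Rightarrow> (nat list \<Rightarrow> 'a) \<Rightarrow> nat list \<Rightarrow> 'a" where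
  "qprod k l X Y = (\<lambda>nu. \<Sum>lam\<in>ydiag k l. X lam * giambelli_op k l lam Y nu)"

text \<open>Value of a class X at a point of Spec R, the point being given by the values
  \<open>chi \<lambda>\<close> of the Schubert classes.\<close>
definition evalpt :: "nat \<Rightarrow> nat \<Rightarrow> (nat list \<Rightarrow> complex) \<Rightarrow> (nat list \<Rightarrow> complex) \<Rightarrow> complex" where
  "evalpt k l chi X = (\<Sum>lam\<in>ydiag k l. X lam * chi lam)"

text \<open>Points of Spec R = \<open>\<complex>\<close>-algebra homomorphisms \<open>R \<rightarrow> \<complex>\<close>, R = QH^*(G, \<complex>).\<close>
definition spec_point :: "nat \<Rightarrow> nat \<Rightarrow> (nat list \<Rightarrow> complex) \<Rightarrow> bool" where
  "spec_point k l chi \<longleftrightarrow>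
     evalpt k l chi (schub (replicate l 0)) = 1 \<and>
     (\<forall>X Y. supported k l X \<longrightarrow> supported k l Y \<longrightarrow>
        evalpt k l chi (qprod k l X Y) = evalpt k l chi X * evalpt k l chi Y)"

definition durfee :: "nat \<Rightarrow> nat list \<Rightarrow> nat" where
  "durfee l lam = (if \<exists>i\<in>{1..l}. i \<le> lam ! (i - 1)
      then Max {i\<in>{1..l}. i \<le> lam ! (i - 1)} else 0)"

definition bar_diag :: "nat \<Rightarrow> nat \<Rightarrow> nat list \<Rightarrow> nat list" where
  "bar_diag k l lam = (let d = durfee l lam in
     map (\<lambda>i. if i \<le> d then d + k - lam ! (d - i) else d - lam ! (l - i + d)) [1..<l+1])"

text \<open>The involution \<open>X \<mapsto> \<overline>X\<close>, extended \<open>\<int>\<close>-linearly.\<close>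
definition qbar :: "nat \<Rightarrow> nat \<Rightarrow> (nat list \<Rightarrow> 'a::comm_ring_1) \<Rightarrow> nat list \<Rightarrow> 'a" where
  "qbar k l X = (\<lambda>mu. \<Sum>lam\<in>{lam\<in>ydiag k l. bar_diag k l lam = mu}. X lam)"

end

theory Submission
  imports Defs "HOL-Computational_Algebra.Polynomial_FPS" "HOL-Combinatorics.Cycles"
begin

text \<open>
  Write \<open>n = k + l\<close>, \<open>\<delta> = (l - 1, \<dots>, 1, 0)\<close> and, for an \<open>l\<close>-tuple \<open>\<zeta>\<close> of roots of
  \<open>z\<^sup>n = (-1)\<^sup>l\<^sup>-\<^sup>1\<close>, let \<open>a\<^sub>q(\<zeta>) = det (\<zeta>\<^sub>b ^ q\<^sub>a)\<close> be the alternant.  By the quantum Pieri rule,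
  \<open>\<lambda> \<mapsto> a\<^sub>\<lambda>\<^sub>+\<^sub>\<delta>(\<zeta>)\<close> is a joint eigenvector of multiplication by the special classes
  \<open>S\<^sub>(\<^sub>e\<^sub>)\<close>, with eigenvalues the complete symmetric functions \<open>h\<^sub>e(\<zeta>)\<close>; the choice of
  \<open>(-1)\<^sup>l\<^sup>-\<^sup>1\<close> absorbs the sign of the cyclic permutation of rows caused by the quantum terms.
  These alternants are orthogonal for summation over all tuples of roots, so a point \<open>p\<close> of
  \<open>Spec R\<close>, being a joint eigenvector as well, is a combination of them.  Some alternant in
  this combination therefore has the eigenvalues of \<open>p\<close>, and since a solution of the Pieri
  equations is determined by its value at \<open>S\<^sub>\<emptyset>\<close>, \<open>p(S\<^sub>\<lambda>) = a\<^sub>\<lambda>\<^sub>+\<^sub>\<delta>(\<zeta>) / a\<^sub>\<delta>(\<zeta>)\<close> for some \<open>\<zeta>\<close>.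

  All \<open>\<zeta>\<^sub>b\<close> have modulus one, so \<open>cnj \<zeta>\<^sub>b = \<zeta>\<^sub>b\<^sup>-\<^sup>1\<close>.  Multiplying the columns of \<open>cnj a\<^sub>\<lambda>\<^sub>+\<^sub>\<delta>(\<zeta>)\<close>
  by \<open>\<zeta>\<^sub>b\<^sup>l\<^sup>-\<^sup>1\<close>, and its first \<open>d\<close> rows (\<open>d\<close> the Durfee number of \<open>\<lambda>\<close>) by \<open>\<zeta>\<^sub>b\<^sup>n\<close>, turns its
  exponents into those of \<open>\<overline>\<lambda> + \<delta>\<close> up to a permutation of the rows.  Hence
  \<open>a\<^bsub>\<overline>\<lambda>+\<delta>\<^esub>(\<zeta>) = K * cnj a\<^sub>\<lambda>\<^sub>+\<^sub>\<delta>(\<zeta>)\<close> with \<open>K\<close> independent of \<open>\<lambda>\<close>; dividing by the case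
  \<open>\<lambda> = \<emptyset>\<close> gives \<open>p(S\<^bsub>\<overline>\<lambda>\<^esub>) = cnj p(S\<^sub>\<lambda>)\<close>, and the theorem follows by linearity.
\<close>

section \<open>Leibniz determinants of square arrays\<close>

lemma permutes_lessThan: "\<sigma> permutes {..<l} \<Longrightarrow> a < l \<Longrightarrow> \<sigma> a < l"
  using permutes_in_image by fastforce

lemma permutes_id_if_ge:
  fixes \<rho> :: "nat \<Rightarrow> nat"
  assumes \<rho>: "\<rho> permutes {..<l}" and ge: "\<And>a. a < l \<Longrightarrow> a \<le> \<rho> a" and a: "a < l"
  shows "\<rho> a = a"
proof -
  have "(\<Sum>a<l. \<rho> a - a) = (\<Sum>a<l. \<rho> a) - (\<Sum>a<l. a)"
    by (rule sum_subtractf_nat) (use ge in simp)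
  also have "\<dots> = 0" using sum.permute[OF \<rho>, of "\<lambda>a. a"] by (simp add: o_def)
  finally have "\<forall>a\<in>{..<l}. \<rho> a - a = 0" by simp
  then show ?thesis using ge a by (metis diff_is_0_eq le_antisym lessThan_iff)
qed

lemma permutes_lessThan_descent:
  fixes w :: "nat \<Rightarrow> nat"
  assumes w: "w permutes {..<l}" and "w \<noteq> id"
  shows "\<exists>i<l. w i < i"
proof (rule ccontr)
  assume "\<not> (\<exists>i<l. w i < i)"
  then have "\<And>i. i < l \<Longrightarrow> i \<le> w i" by (meson not_less)
  then have "w i = i" for i
    using permutes_id_if_ge[OF w] w by (cases "i < l") (auto simp: permutes_def)
  with \<open>w \<noteq> id\<close> show False by (simp add: fun_eq_iff)
qed

definition leibniz_det :: "nat \<Rightarrow> (nat \<Rightarrow> nat \<Rightarrow> 'a::comm_ring_1) \<Rightarrow> 'a" where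
  "leibniz_det l f = (\<Sum>\<sigma> | \<sigma> permutes {..<l}. of_int (sign \<sigma>) * (\<Prod>a<l. f a (\<sigma> a)))"

lemma leibniz_det_cong:
  assumes "\<And>a b. a < l \<Longrightarrow> b < l \<Longrightarrow> f a b = g a b"
  shows "leibniz_det l f = leibniz_det l g"
  unfolding leibniz_det_def
  by (intro sum.cong refl arg_cong2[where f="(*)"] prod.cong) (auto simp: assms permutes_lessThan)

lemma leibniz_det_scale_cols:
  "(\<Prod>b<l. c b) * leibniz_det l f = leibniz_det l (\<lambda>a b. c b * f a b)"
proof -
  have "(\<Prod>b<l. c b) * leibniz_det l f
      = (\<Sum>\<sigma> | \<sigma> permutes {..<l}. of_int (sign \<sigma>) * ((\<Prod>b<l. c b) * (\<Prod>a<l. f a (\<sigma> a))))"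
    unfolding leibniz_det_def by (simp add: sum_distrib_left algebra_simps)
  also have "\<dots> = (\<Sum>\<sigma> | \<sigma> permutes {..<l}. of_int (sign \<sigma>) * (\<Prod>a<l. c (\<sigma> a) * f a (\<sigma> a)))"
  proof (intro sum.cong refl)
    fix \<sigma> assume "\<sigma> \<in> {\<sigma>. \<sigma> permutes {..<l}}"
    then have "(\<Prod>b<l. c b) = (\<Prod>a<l. c (\<sigma> a))"
      using prod.permute[of \<sigma> "{..<l}" c] by (simp add: o_def)
    then show "of_int (sign \<sigma>) * ((\<Prod>b<l. c b) * (\<Prod>a<l. f a (\<sigma> a))) =
          of_int (sign \<sigma>) * (\<Prod>a<l. c (\<sigma> a) * f a (\<sigma> a))"
      by (simp add: prod.distrib)
  qed
  finally show ?thesis unfolding leibniz_det_def .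
qed

lemma leibniz_det_scale_rows:
  "leibniz_det l (\<lambda>a b. d a * f a b) = (\<Prod>a<l. d a) * leibniz_det l f"
  unfolding leibniz_det_def by (simp add: prod.distrib sum_distrib_left algebra_simps)

lemma leibniz_det_permute_rows:
  assumes \<rho>: "\<rho> permutes {..<l}"
  shows "leibniz_det l (\<lambda>a b. f (\<rho> a) b) = of_int (sign \<rho>) * leibniz_det l f"
proof -
  have \<rho>': "inv \<rho> permutes {..<l}" using \<rho> by (rule permutes_inv)
  have "leibniz_det l (\<lambda>a b. f (\<rho> a) b)
     = (\<Sum>\<sigma> | \<sigma> permutes {..<l}. of_int (sign \<sigma>) * (\<Prod>a<l. f a (\<sigma> (inv \<rho> a))))"
    unfolding leibniz_det_def
  proof (intro sum.cong refl)
    fix \<sigma>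
    have "(\<Prod>a<l. f (\<rho> a) (\<sigma> a)) = (\<Prod>a<l. f (\<rho> (inv \<rho> a)) (\<sigma> (inv \<rho> a)))"
      using prod.permute[OF \<rho>', of "\<lambda>a. f (\<rho> a) (\<sigma> a)"] by (simp add: o_def)
    also have "\<dots> = (\<Prod>a<l. f a (\<sigma> (inv \<rho> a)))"
      using permutes_inverses(1)[OF \<rho>] by simp
    finally show "of_int (sign \<sigma>) * (\<Prod>a<l. f (\<rho> a) (\<sigma> a)) =
         of_int (sign \<sigma>) * (\<Prod>a<l. f a (\<sigma> (inv \<rho> a)))" by simp
  qed
  also have "\<dots> = (\<Sum>\<sigma> | \<sigma> permutes {..<l}.
      of_int (sign (\<sigma> \<circ> \<rho>)) * (\<Prod>a<l. f a ((\<sigma> \<circ> \<rho>) (inv \<rho> a))))"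
    by (rule sum_permutations_compose_right[OF \<rho>])
  also have "\<dots> = (\<Sum>\<sigma> | \<sigma> permutes {..<l}. of_int (sign \<rho>) * (of_int (sign \<sigma>) * (\<Prod>a<l. f a (\<sigma> a))))"
  proof (intro sum.cong refl)
    fix \<sigma> assume "\<sigma> \<in> {\<sigma>. \<sigma> permutes {..<l}}"
    then have "sign (\<sigma> \<circ> \<rho>) = sign \<sigma> * sign \<rho>"
      using \<rho> by (intro sign_compose) (auto intro: permutes_imp_permutation)
    moreover have "\<And>a. (\<sigma> \<circ> \<rho>) (inv \<rho> a) = \<sigma> a"
      using permutes_inverses(1)[OF \<rho>] by simp
    ultimately show "of_int (sign (\<sigma> \<circ> \<rho>)) * (\<Prod>a<l. f a ((\<sigma> \<circ> \<rho>) (inv \<rho> a))) =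
         of_int (sign \<rho>) * (of_int (sign \<sigma>) * (\<Prod>a<l. f a (\<sigma> a)))" by simp
  qed
  also have "\<dots> = of_int (sign \<rho>) * leibniz_det l f"
    unfolding leibniz_det_def by (simp add: sum_distrib_left)
  finally show ?thesis .
qed

lemma leibniz_det_equal_rows:
  fixes f :: "nat \<Rightarrow> nat \<Rightarrow> 'a::{idom,ring_char_0}"
  assumes "a < l" "a' < l" "a \<noteq> a'" "\<And>b. b < l \<Longrightarrow> f a b = f a' b"
  shows "leibniz_det l f = 0"
proof -
  let ?t = "Transposition.transpose a a'"
  have t: "?t permutes {..<l}" using assms by (intro permutes_swap_id) auto
  have "leibniz_det l (\<lambda>x b. f (?t x) b) = leibniz_det l f"
  proof (rule leibniz_det_cong)
    fix x b assume "x < l" "b < l"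
    show "f (?t x) b = f x b"
      using assms(4)[OF \<open>b < l\<close>] by (cases "x = a"; cases "x = a'") (auto simp: transpose_def)
  qed
  moreover have "leibniz_det l (\<lambda>x b. f (?t x) b) = - leibniz_det l f"
    using leibniz_det_permute_rows[OF t, of f] assms by (simp add: sign_swap_id)
  ultimately have "2 * leibniz_det l f = 0" by simp
  then show ?thesis by simp
qed

lemma leibniz_det_multilinear:
  assumes "\<And>a. finite (J a)"
  shows "leibniz_det l (\<lambda>a b. \<Sum>j\<in>J a. F a j b)
       = (\<Sum>\<beta>\<in>PiE {..<l} J. leibniz_det l (\<lambda>a b. F a (\<beta> a) b))"
proof -
  have "leibniz_det l (\<lambda>a b. \<Sum>j\<in>J a. F a j b)
     = (\<Sum>\<sigma> | \<sigma> permutes {..<l}. of_int (sign \<sigma>) * (\<Sum>\<beta>\<in>PiE {..<l} J. \<Prod>a<l. F a (\<beta> a) (\<sigma> a)))"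
    unfolding leibniz_det_def by (subst prod_sum_PiE) (auto simp: assms)
  also have "\<dots> = (\<Sum>\<beta>\<in>PiE {..<l} J. leibniz_det l (\<lambda>a b. F a (\<beta> a) b))"
    unfolding leibniz_det_def sum_distrib_left by (rule sum.swap)
  finally show ?thesis .
qed

lemma prod_monom:
  fixes c :: "nat \<Rightarrow> 'a::comm_semiring_1"
  shows "(\<Prod>a<l. monom (c a) (d a)) = monom (\<Prod>a<l. c a) (\<Sum>a<l. d a)"
  by (induction l) (simp_all add: mult_monom monom_0 one_pCons)

lemma leibniz_det_monom:
  "leibniz_det l (\<lambda>a b. monom (f a b) (d a)) = monom (leibniz_det l f) (\<Sum>a<l. d a)"
  unfolding leibniz_det_def prod_monom by (simp add: monom_sum of_int_monom mult_monom)

section \<open>Strictly decreasing sequences\<close>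

lemma strict_antimono_on_lessThan_iff:
  "strict_antimono_on {..<l} (q :: nat \<Rightarrow> 'a::order) \<longleftrightarrow> (\<forall>a. Suc a < l \<longrightarrow> q (Suc a) < q a)"
proof
  assume q: "strict_antimono_on {..<l} q"
  show "\<forall>a. Suc a < l \<longrightarrow> q (Suc a) < q a"
  proof (intro allI impI)
    fix a assume "Suc a < l"
    then show "q (Suc a) < q a" using monotone_onD[OF q, of a "Suc a"] by simp
  qed
next
  assume step: "\<forall>a. Suc a < l \<longrightarrow> q (Suc a) < q a"
  have less: "q j < q i" if "i < j" "j < l" for i j
    using that
  proof (induction j)
    case (Suc j)
    then show ?case using step by (cases "i = j") (auto intro: less_trans)
  qed simp
  show "strict_antimono_on {..<l} q"
    by (rule monotone_onI) (simp add: less)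
qed

lemma strict_antimono_onD_Suc:
  "strict_antimono_on {..<l} (q :: nat \<Rightarrow> 'a::order) \<Longrightarrow> Suc a < l \<Longrightarrow> q (Suc a) < q a"
  by (simp add: strict_antimono_on_lessThan_iff)

lemma strict_antimono_onD_less:
  assumes "strict_antimono_on {..<l} (q :: nat \<Rightarrow> 'a::order)" "i < j" "j < l"
  shows "q j < q i"
proof -
  have "i < l" using assms(2,3) by (rule less_trans)
  then show ?thesis using monotone_onD[OF assms(1), of i j] assms(2,3) by simp
qed

lemma strict_antimono_on_gap:
  fixes Q :: "nat \<Rightarrow> nat"
  assumes "strict_antimono_on {..<l} Q" "i \<le> j" "j < l"
  shows "Q j + (j - i) \<le> Q i"
  using assms(2,3)
proof (induction j)
  case (Suc j)
  then show ?case
    using strict_antimono_onD_Suc[OF assms(1), of j] by (cases "i = Suc j") auto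
qed simp

lemma strict_antimono_permute_eq_id:
  fixes q q' :: "nat \<Rightarrow> 'a::linorder"
  assumes q: "strict_antimono_on {..<l} q" and q': "strict_antimono_on {..<l} q'"
    and \<rho>: "\<rho> permutes {..<l}" and eq: "\<And>a. a < l \<Longrightarrow> q a = q' (\<rho> a)" and a: "a < l"
  shows "\<rho> a = a"
proof -
  have mono: "\<rho> a < \<rho> a'" if "a < a'" "a' < l" for a a'
  proof (rule ccontr)
    assume "\<not> \<rho> a < \<rho> a'"
    then have "\<rho> a' \<le> \<rho> a" by simp
    moreover have "\<rho> a < l" using permutes_lessThan[OF \<rho>] that by simp
    ultimately have "q' (\<rho> a) \<le> q' (\<rho> a')"
      using strict_antimono_onD_less[OF q', of "\<rho> a'" "\<rho> a"] by (cases "\<rho> a' = \<rho> a") auto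
    moreover have "q a' < q a" using strict_antimono_onD_less[OF q that] .
    ultimately show False using eq that by simp
  qed
  have "a \<le> \<rho> a" if "a < l" for a
    using that
  proof (induction a)
    case (Suc a)
    then show ?case using mono[of a "Suc a"] by simp
  qed simp
  then show ?thesis by (rule permutes_id_if_ge[OF \<rho> _ a])
qed

lemma strict_antimono_on_lower:
  fixes Q :: "nat \<Rightarrow> nat"
  shows "strict_antimono_on {..<l} Q \<Longrightarrow> a < l \<Longrightarrow> l - 1 - a \<le> Q a"
  using strict_antimono_on_gap[of l Q a "l - 1"] by arith

section \<open>The cyclic shift\<close>

definition cyclic_shift :: "nat \<Rightarrow> nat \<Rightarrow> nat" where
  "cyclic_shift l a = (if a = 0 then l - 1 else if a < l then a - 1 else a)"

lemma cyclic_shift_permutes: "1 \<le> l \<Longrightarrow> cyclic_shift l permutes {..<l}"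
proof -
  assume l: "1 \<le> l"
  have "bij_betw (cyclic_shift l) {..<l} {..<l}"
    by (rule bij_betw_byWitness[where f'="\<lambda>a. if a = l - 1 then 0 else a + 1"])
       (use l in \<open>auto simp: cyclic_shift_def\<close>)
  moreover have "\<And>x. x \<notin> {..<l} \<Longrightarrow> cyclic_shift l x = x"
    using l by (auto simp: cyclic_shift_def)
  ultimately show ?thesis by (rule bij_imp_permutes)
qed

lemma cyclic_shift_Suc:
  "1 \<le> l \<Longrightarrow> cyclic_shift (Suc l) = Transposition.transpose (l - 1) l \<circ> cyclic_shift l"
  by (rule ext) (auto simp: cyclic_shift_def transpose_def less_Suc_eq)

lemma sign_cyclic_shift: "1 \<le> l \<Longrightarrow> sign (cyclic_shift l) = (-1) ^ (l - 1)"
proof (induction l rule: dec_induct)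
  case base
  have "cyclic_shift 1 = id" by (rule ext) (auto simp: cyclic_shift_def)
  then show ?case by simp
next
  case (step l)
  have "sign (cyclic_shift (Suc l)) = sign (Transposition.transpose (l - 1) l) * sign (cyclic_shift l)"
    unfolding cyclic_shift_Suc[OF step(1)]
    using cyclic_shift_permutes[OF step(1)]
    by (intro sign_compose) (auto intro: permutes_imp_permutation permutation_swap_id)
  also have "\<dots> = - ((-1) ^ (l - 1))" using step by (simp add: sign_swap_id)
  also have "\<dots> = (-1) ^ (Suc l - 1)" using step(1) by (cases l) auto
  finally show ?case .
qed

lemma cyclic_shift_funpow:
  assumes "d \<le> l" "i < l"
  shows "(cyclic_shift l ^^ d) i = (if d \<le> i then i - d else i + l - d)"
  using assms(1)
proof (induction d)
  case (Suc d)
  then have IH: "(cyclic_shift l ^^ d) i = (if d \<le> i then i - d else i + l - d)" by simp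
  have step: "(cyclic_shift l ^^ Suc d) i = cyclic_shift l ((cyclic_shift l ^^ d) i)" by simp
  show ?case
  proof (cases "Suc d \<le> i")
    case True then show ?thesis unfolding step IH using assms(2) by (simp add: cyclic_shift_def)
  next
    case False
    then show ?thesis
      unfolding step IH using assms(2) Suc.prems by (cases "d = i") (simp_all add: cyclic_shift_def)
  qed
qed simp

lemma sign_cyclic_shift_funpow:
  assumes l: "1 \<le> l"
  shows "sign (cyclic_shift l ^^ d) = (-1) ^ ((l - 1) * d)"
proof (induction d)
  case (Suc d)
  have "sign (cyclic_shift l ^^ Suc d) = sign (cyclic_shift l) * sign (cyclic_shift l ^^ d)"
    unfolding funpow_Suc_right[symmetric] funpow.simps(2)
    using cyclic_shift_permutes[OF l] permutes_funpow[OF cyclic_shift_permutes[OF l]]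
    by (intro sign_compose) (auto intro: permutes_imp_permutation)
  also have "\<dots> = (-1) ^ ((l - 1) * Suc d)" using Suc sign_cyclic_shift[OF l] by (simp add: power_add)
  finally show ?case .
qed simp

lemma cyclic_shift_closed_eq:
  assumes A: "A \<subseteq> {..<l}" and a: "a \<in> A" and closed: "\<And>a. a \<in> A \<Longrightarrow> cyclic_shift l a \<in> A"
  shows "A = {..<l}"
proof -
  have down: "b - j \<in> A" if "b \<in> A" "j \<le> b" for b j
    using that(2)
  proof (induction j)
    case (Suc j)
    then have "b - j \<in> A" "0 < b - j" by simp_all
    moreover from this have "cyclic_shift l (b - j) = b - Suc j" using A by (auto simp: cyclic_shift_def)
    ultimately show ?case using closed[of "b - j"] by simp
  qed (use that in simp)
  have "0 \<in> A" using down[OF a, of a] by simp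
  then have "l - 1 \<in> A" using closed[of 0] by (simp add: cyclic_shift_def)
  have "c \<in> A" if "c < l" for c
  proof -
    have "l - 1 - (l - 1 - c) \<in> A" using down[OF \<open>l - 1 \<in> A\<close>, of "l - 1 - c"] by simp
    moreover have "l - 1 - (l - 1 - c) = c" using that by simp
    ultimately show ?thesis by simp
  qed
  with A show ?thesis by blast
qed

text \<open>Expanding a determinant whose rows are \<open>U\<^sub>a - c\<^sub>a U\<^bsub>a-1\<^esub>\<close> (indices modulo \<open>l\<close>) by
  multilinearity, every mixed term has a row \<open>a\<close> taken from the second part and the row
  \<open>a - 1\<close> from the first part; these two rows are equal.\<close>

lemma leibniz_det_mixed_shifted_rows:
  fixes U :: "nat \<Rightarrow> nat \<Rightarrow> 'a::{idom,ring_char_0}" and \<beta> :: "nat \<Rightarrow> nat"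
  assumes l: "1 \<le> l" and \<beta>: "\<And>a. a < l \<Longrightarrow> \<beta> a = 0 \<or> \<beta> a = 1"
    and \<beta>0: "\<exists>a<l. \<beta> a = 0" and \<beta>1: "\<exists>a<l. \<beta> a = 1"
  shows "leibniz_det l (\<lambda>a b. if \<beta> a = 0 then U a b else - c a * U (cyclic_shift l a) b) = 0"
proof -
  have "\<exists>a<l. \<beta> a = 1 \<and> \<beta> (cyclic_shift l a) = 0"
  proof (rule ccontr)
    assume no_change: "\<not> ?thesis"
    obtain a1 where "a1 < l" "\<beta> a1 = 1" using \<beta>1 by blast
    have "{a. a < l \<and> \<beta> a = 1} = {..<l}"
    proof (rule cyclic_shift_closed_eq[where a = a1])
      fix a assume "a \<in> {a. a < l \<and> \<beta> a = 1}"
      then have a: "a < l" "\<beta> a = 1" by simp_all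
      then have "cyclic_shift l a < l" using permutes_lessThan[OF cyclic_shift_permutes[OF l]] by simp
      moreover have "\<beta> (cyclic_shift l a) \<noteq> 0" using no_change a by auto
      ultimately show "cyclic_shift l a \<in> {a. a < l \<and> \<beta> a = 1}" using \<beta>[of "cyclic_shift l a"] by simp
    qed (use \<open>a1 < l\<close> \<open>\<beta> a1 = 1\<close> in auto)
    moreover obtain a0 where "a0 < l" "\<beta> a0 = 0" using \<beta>0 by blast
    ultimately have "a0 \<in> {a. a < l \<and> \<beta> a = 1}" by simp
    with \<open>\<beta> a0 = 0\<close> show False by simp
  qed
  then obtain a where a: "a < l" "\<beta> a = 1" "\<beta> (cyclic_shift l a) = 0" by blast
  define \<rho> where "\<rho> x = (if \<beta> x = 0 then x else cyclic_shift l x)" for x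
  have "leibniz_det l (\<lambda>x b. if \<beta> x = 0 then U x b else - c x * U (cyclic_shift l x) b)
      = leibniz_det l (\<lambda>x b. (if \<beta> x = 0 then 1 else - c x) * U (\<rho> x) b)"
    by (rule leibniz_det_cong) (simp add: \<rho>_def)
  also have "\<dots> = (\<Prod>x<l. if \<beta> x = 0 then 1 else - c x) * leibniz_det l (\<lambda>x b. U (\<rho> x) b)"
    by (rule leibniz_det_scale_rows)
  also have "leibniz_det l (\<lambda>x b. U (\<rho> x) b) = 0"
  proof (rule leibniz_det_equal_rows)
    show "a < l" "cyclic_shift l a < l" using a permutes_lessThan[OF cyclic_shift_permutes[OF l]] by auto
    show "a \<noteq> cyclic_shift l a" using a by auto
    show "\<And>b. U (\<rho> a) b = U (\<rho> (cyclic_shift l a)) b" using a by (simp add: \<rho>_def)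
  qed
  finally show ?thesis by simp
qed

lemma PiE_binary_nonconstant:
  assumes \<beta>: "\<beta> \<in> PiE {..<l} (\<lambda>_. {..<2::nat})"
    and "\<beta> \<noteq> (\<lambda>a\<in>{..<l}. 0)" "\<beta> \<noteq> (\<lambda>a\<in>{..<l}. 1)"
  shows "\<And>a. a < l \<Longrightarrow> \<beta> a = 0 \<or> \<beta> a = 1" and "\<exists>a<l. \<beta> a = 0" and "\<exists>a<l. \<beta> a = 1"
proof -
  show binary: "\<beta> a = 0 \<or> \<beta> a = 1" if "a < l" for a
    using PiE_mem[OF \<beta>, of a] that by auto
  have differs: "\<exists>a<l. \<beta> a \<noteq> i" if "\<beta> \<noteq> (\<lambda>a\<in>{..<l}. i)" for i
  proof (rule ccontr)
    assume "\<not> (\<exists>a<l. \<beta> a \<noteq> i)"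
    then have "\<beta> a = (\<lambda>a\<in>{..<l}. i) a" for a
      using PiE_arb[OF \<beta>, of a] by (cases "a < l") auto
    with that show False by blast
  qed
  obtain a0 a1 where "a0 < l" "\<beta> a0 \<noteq> 1" "a1 < l" "\<beta> a1 \<noteq> 0"
    using differs[of 1] differs[of 0] assms(2,3) by blast
  then show "\<exists>a<l. \<beta> a = 0" "\<exists>a<l. \<beta> a = 1"
    using binary[of a0] binary[of a1] by auto
qed

lemma leibniz_det_rows_minus_shifted:
  fixes U :: "nat \<Rightarrow> nat \<Rightarrow> 'a::{idom,ring_char_0}"
  assumes l: "1 \<le> l"
  shows "leibniz_det l (\<lambda>a b. U a b - c a * U (cyclic_shift l a) b)
       = leibniz_det l U + (\<Prod>a<l. - c a) * of_int (sign (cyclic_shift l)) * leibniz_det l U"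
proof -
  define F where "F a j b = (if j = 0 then U a b else - c a * U (cyclic_shift l a) b)" for a and j :: nat and b
  define S where "S = PiE {..<l} (\<lambda>_. {..<2::nat})"
  define T where "T \<beta> = leibniz_det l (\<lambda>a b. F a (\<beta> a) b)" for \<beta>
  define \<beta>0 where "\<beta>0 = (\<lambda>a\<in>{..<l}. 0::nat)"
  define \<beta>1 where "\<beta>1 = (\<lambda>a\<in>{..<l}. 1::nat)"
  have \<beta>01_S: "{\<beta>0, \<beta>1} \<subseteq> S"
    unfolding S_def \<beta>0_def \<beta>1_def by (auto intro!: iffD2[OF restrict_PiE])
  have "\<beta>0 0 \<noteq> \<beta>1 0" using l unfolding \<beta>0_def \<beta>1_def by simp
  then have \<beta>01_ne: "\<beta>0 \<noteq> \<beta>1" by metis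
  have "leibniz_det l (\<lambda>a b. U a b - c a * U (cyclic_shift l a) b) = leibniz_det l (\<lambda>a b. \<Sum>j<2. F a j b)"
    by (rule leibniz_det_cong) (simp add: F_def numeral_2_eq_2)
  also have "\<dots> = sum T S"
    unfolding T_def S_def by (rule leibniz_det_multilinear) (rule finite_lessThan)
  also have "\<dots> = sum T (S - {\<beta>0, \<beta>1}) + sum T {\<beta>0, \<beta>1}"
    by (rule sum.subset_diff[OF \<beta>01_S]) (simp add: S_def finite_PiE)
  also have "sum T (S - {\<beta>0, \<beta>1}) = 0"
  proof (rule sum.neutral, rule ballI)
    fix \<beta> assume \<beta>: "\<beta> \<in> S - {\<beta>0, \<beta>1}"
    then have "\<beta> \<in> PiE {..<l} (\<lambda>_. {..<2})" "\<beta> \<noteq> \<beta>0" "\<beta> \<noteq> \<beta>1" by (simp_all add: S_def)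
    note binary = PiE_binary_nonconstant[OF this[unfolded \<beta>0_def \<beta>1_def]]
    show "T \<beta> = 0"
      unfolding T_def F_def
      using leibniz_det_mixed_shifted_rows[where \<beta> = \<beta>, OF l binary(1)] binary(2,3) by blast
  qed
  also have "sum T {\<beta>0, \<beta>1} = T \<beta>0 + T \<beta>1" using \<beta>01_ne by simp
  also have "T \<beta>0 = leibniz_det l U"
    unfolding T_def by (rule leibniz_det_cong) (simp add: F_def \<beta>0_def)
  also have "T \<beta>1 = leibniz_det l (\<lambda>a b. (- c a) * U (cyclic_shift l a) b)"
    unfolding T_def by (rule leibniz_det_cong) (simp add: F_def \<beta>1_def)
  also have "\<dots> = (\<Prod>a<l. - c a) * leibniz_det l (\<lambda>a b. U (cyclic_shift l a) b)"
    by (rule leibniz_det_scale_rows)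
  also have "leibniz_det l (\<lambda>a b. U (cyclic_shift l a) b) = of_int (sign (cyclic_shift l)) * leibniz_det l U"
    by (rule leibniz_det_permute_rows[OF cyclic_shift_permutes[OF l]])
  finally show ?thesis by (simp add: algebra_simps)
qed

section \<open>Alternants and the complete homogeneous symmetric functions\<close>

definition alternant :: "nat \<Rightarrow> (nat \<Rightarrow> 'a::comm_ring_1) \<Rightarrow> (nat \<Rightarrow> nat) \<Rightarrow> 'a" where
  "alternant l \<zeta> q = leibniz_det l (\<lambda>a b. \<zeta> b ^ q a)"

definition complete_hom :: "nat \<Rightarrow> (nat \<Rightarrow> 'a::field) \<Rightarrow> nat \<Rightarrow> 'a" where
  "complete_hom l \<zeta> e = fps_nth (inverse (fps_of_poly (\<Prod>b<l. [:1, - \<zeta> b:]))) e"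

lemma alternant_cong: "(\<And>a. a < l \<Longrightarrow> q a = q' a) \<Longrightarrow> alternant l \<zeta> q = alternant l \<zeta> q'"
  unfolding alternant_def by (rule leibniz_det_cong) simp

definition cyclic_gap :: "nat \<Rightarrow> nat \<Rightarrow> (nat \<Rightarrow> nat) \<Rightarrow> nat \<Rightarrow> nat" where
  "cyclic_gap l n q a = (if a = 0 then q (l - 1) + n - q 0 else q (a - 1) - q a)"

text \<open>For \<open>q = \<lambda> + \<delta>\<close> and \<open>n = k + l\<close>, the vectors \<open>\<beta>\<close> in \<open>pieri_box l n q e\<close> correspond to the
  diagrams \<open>\<mu>\<close> of the quantum Pieri expansion of \<open>S\<^sub>(\<^sub>e\<^sub>) * S\<^sub>\<lambda>\<close>: \<open>\<mu> + \<delta>\<close> is \<open>q + \<beta>\<close> with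
  an entry \<open>\<ge> n\<close> reduced modulo \<open>n\<close> and re-sorted.\<close>

definition pieri_box :: "nat \<Rightarrow> nat \<Rightarrow> (nat \<Rightarrow> nat) \<Rightarrow> nat \<Rightarrow> (nat \<Rightarrow> nat) set" where
  "pieri_box l n q e = {\<beta>\<in>PiE {..<l} (\<lambda>a. {..<cyclic_gap l n q a}). (\<Sum>a<l. \<beta> a) = e}"

lemma sum_cyclic_gap:
  assumes l: "1 \<le> l" and q: "strict_antimono_on {..<l} q" and q0: "q 0 < n + q (l - 1)"
  shows "(\<Sum>a<l. cyclic_gap l n q a) = n"
proof -
  have le0: "q j \<le> q 0" if "j < l" for j
    using strict_antimono_on_gap[OF q, of 0 j] that by simp
  have partial: "(\<Sum>a<j. cyclic_gap l n q a) = cyclic_gap l n q 0 + (q 0 - q (j - 1))"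
    if "1 \<le> j" "j \<le> l" for j
    using that
  proof (induction j rule: dec_induct)
    case (step j)
    have "q j \<le> q (j - 1)" using strict_antimono_on_gap[OF q, of "j - 1" j] step by simp
    moreover have "q (j - 1) \<le> q 0" using le0[of "j - 1"] step by simp
    moreover have "(\<Sum>a<Suc j. cyclic_gap l n q a)
        = cyclic_gap l n q 0 + (q 0 - q (j - 1)) + cyclic_gap l n q j"
      using step by simp
    moreover have "cyclic_gap l n q j = q (j - 1) - q j" using step(1) by (simp add: cyclic_gap_def)
    ultimately show ?case by simp
  qed simp
  show ?thesis using partial[of l] l le0[of "l - 1"] q0 by (simp add: cyclic_gap_def)
qed

lemma telescope_geometric_row:
  fixes z :: "'a::comm_ring_1"
  shows "[:1, -z:] * (\<Sum>j<g. monom (z ^ (m + j)) j) = monom (z ^ m) 0 - monom (z ^ (m + g)) g"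
proof (induction g)
  case (Suc g)
  have e: "[:1, -z:] = monom 1 0 - monom z 1" by (simp add: monom_0 monom_Suc)
  have "[:1, -z:] * monom (z ^ (m + g)) g = monom (z ^ (m + g)) g - monom (z ^ (m + Suc g)) (Suc g)"
    unfolding e by (simp add: algebra_simps mult_monom)
  then show ?case by (simp only: sum.lessThan_Suc distrib_left Suc.IH) (simp add: algebra_simps)
qed simp

lemma telescope_cyclic_gap:
  fixes z :: "'a::comm_ring_1"
  assumes z: "z ^ n = \<epsilon>" and q: "strict_antimono_on {..<l} q" and q0: "q 0 < n + q (l - 1)"
    and a: "a < l"
  shows "[:1, - z:] * (\<Sum>j<cyclic_gap l n q a. monom (z ^ (q a + j)) j)
       = monom (z ^ q a) 0 - monom (if a = 0 then \<epsilon> else 1) (cyclic_gap l n q a) * monom (z ^ q (cyclic_shift l a)) 0"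
proof -
  have "[:1, - z:] * (\<Sum>j<cyclic_gap l n q a. monom (z ^ (q a + j)) j)
      = monom (z ^ q a) 0 - monom (z ^ (q a + cyclic_gap l n q a)) (cyclic_gap l n q a)"
    by (rule telescope_geometric_row)
  also have "z ^ (q a + cyclic_gap l n q a) = (if a = 0 then \<epsilon> else 1) * z ^ q (cyclic_shift l a)"
  proof (cases "a = 0")
    case True
    then show ?thesis using q0 z by (simp add: cyclic_gap_def cyclic_shift_def power_add)
  next
    case False
    then have "q a + cyclic_gap l n q a = q (a - 1)"
      using strict_antimono_onD_Suc[OF q, of "a - 1"] a by (simp add: cyclic_gap_def)
    then show ?thesis using False a by (simp add: cyclic_shift_def)
  qed
  finally show ?thesis by (simp add: mult_monom)
qed

lemma prod_minus_cyclic_gap_monom: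
  fixes \<epsilon> :: "'a::comm_ring_1"
  assumes l: "1 \<le> l" and q: "strict_antimono_on {..<l} q" and q0: "q 0 < n + q (l - 1)"
  shows "(\<Prod>a<l. - monom (if a = 0 then \<epsilon> else 1) (cyclic_gap l n q a)) = monom (- \<epsilon> * (-1) ^ (l - 1)) n"
proof -
  have "(\<Prod>a<l. - (if a = 0 then \<epsilon> else 1)) = - \<epsilon> * (-1) ^ (l - 1)"
    using l
  proof (induction l rule: dec_induct)
    case (step m)
    then show ?case by (cases m) (simp_all add: algebra_simps)
  qed simp
  then show ?thesis
    using prod_monom[of "\<lambda>a. - (if a = 0 then \<epsilon> else 1)" "cyclic_gap l n q" l] sum_cyclic_gap[OF l q q0]
    by (simp add: minus_monom)
qed

text \<open>Summing the alternants \<open>a\<^sub>q\<^sub>+\<^sub>\<beta>\<close> over the boxes \<open>\<beta>\<^sub>a < cyclic_gap l n q a\<close>,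
  weighted by \<open>t\<^sup>|\<^sup>\<beta>\<^sup>|\<close>: each row of the resulting determinant telescopes, and the
  determinant of the telescoped rows is computed by \<open>leibniz_det_rows_minus_shifted\<close>.\<close>

lemma alternant_box_sum_poly:
  fixes \<zeta> :: "nat \<Rightarrow> 'a::field_char_0" and q :: "nat \<Rightarrow> nat"
  assumes l: "1 \<le> l" and \<zeta>: "\<And>b. b < l \<Longrightarrow> \<zeta> b ^ n = \<epsilon>"
    and q: "strict_antimono_on {..<l} q" and q0: "q 0 < n + q (l - 1)"
  shows "(\<Prod>b<l. [:1, - \<zeta> b:]) *
      (\<Sum>\<beta>\<in>PiE {..<l} (\<lambda>a. {..<cyclic_gap l n q a}).
         monom (alternant l \<zeta> (\<lambda>a. q a + \<beta> a)) (\<Sum>a<l. \<beta> a))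
    = smult (alternant l \<zeta> q) (1 - monom \<epsilon> n)"
proof -
  define U where "U a b = monom (\<zeta> b ^ q a) 0" for a b
  define c where "c a = monom (if a = 0 then \<epsilon> else 1) (cyclic_gap l n q a)" for a
  have row: "[:1, - \<zeta> b:] * (\<Sum>j<cyclic_gap l n q a. monom (\<zeta> b ^ (q a + j)) j)
        = U a b - c a * U (cyclic_shift l a) b" if "a < l" "b < l" for a b
    using telescope_cyclic_gap[OF \<zeta> q q0, of b a] that by (simp add: U_def c_def)
  have prod_c: "(\<Prod>a<l. - c a) = monom (- \<epsilon> * (-1) ^ (l - 1)) n"
    unfolding c_def by (rule prod_minus_cyclic_gap_monom[OF l q q0])
  have sign: "(of_int (sign (cyclic_shift l)) :: 'a poly) = monom ((-1) ^ (l - 1)) 0"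
    using sign_cyclic_shift[OF l] by (simp add: monom_0 poly_const_pow one_pCons)
  have "(\<Prod>b<l. [:1, - \<zeta> b:]) *
      (\<Sum>\<beta>\<in>PiE {..<l} (\<lambda>a. {..<cyclic_gap l n q a}).
         monom (alternant l \<zeta> (\<lambda>a. q a + \<beta> a)) (\<Sum>a<l. \<beta> a))
    = (\<Prod>b<l. [:1, - \<zeta> b:]) * leibniz_det l (\<lambda>a b. \<Sum>j<cyclic_gap l n q a. monom (\<zeta> b ^ (q a + j)) j)"
    by (simp add: leibniz_det_multilinear alternant_def leibniz_det_monom)
  also have "\<dots> = leibniz_det l (\<lambda>a b. U a b - c a * U (cyclic_shift l a) b)"
    unfolding leibniz_det_scale_cols by (rule leibniz_det_cong) (rule row)
  also have "\<dots> = leibniz_det l U + (\<Prod>a<l. - c a) * of_int (sign (cyclic_shift l)) * leibniz_det l U"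
    by (rule leibniz_det_rows_minus_shifted[OF l])
  also have "leibniz_det l U = monom (alternant l \<zeta> q) 0"
    unfolding U_def alternant_def using leibniz_det_monom[of l "\<lambda>a b. \<zeta> b ^ q a" "\<lambda>_. 0"] by simp
  also have "(-1) ^ (l - 1) * (-1) ^ (l - 1) = (1::'a)"
    by (simp add: power_add[symmetric])
  then have "monom (- \<epsilon> * (-1) ^ (l - 1)) n * monom ((-1) ^ (l - 1)) 0 * monom (alternant l \<zeta> q) 0
      = monom (- (\<epsilon> * alternant l \<zeta> q)) n"
    by (simp add: mult_monom algebra_simps)
  then have "monom (alternant l \<zeta> q) 0 + (\<Prod>a<l. - c a) * of_int (sign (cyclic_shift l)) * monom (alternant l \<zeta> q) 0
      = smult (alternant l \<zeta> q) (1 - monom \<epsilon> n)"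
    unfolding prod_c sign by (simp add: smult_monom monom_0 add_monom algebra_simps smult_diff_right)
  finally show ?thesis .
qed

lemma alternant_box_sum:
  fixes \<zeta> :: "nat \<Rightarrow> 'a::field_char_0" and q :: "nat \<Rightarrow> nat"
  assumes l: "1 \<le> l" and \<zeta>: "\<And>b. b < l \<Longrightarrow> \<zeta> b ^ n = \<epsilon>"
    and q: "strict_antimono_on {..<l} q" and q0: "q 0 < n + q (l - 1)" and e: "e < n"
  shows "(\<Sum>\<beta>\<in>pieri_box l n q e. alternant l \<zeta> (\<lambda>a. q a + \<beta> a))
       = complete_hom l \<zeta> e * alternant l \<zeta> q"
proof -
  define P where "P = (\<Prod>b<l. [:1, - \<zeta> b:])"
  define L where "L = (\<Sum>\<beta>\<in>PiE {..<l} (\<lambda>a. {..<cyclic_gap l n q a}).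
      monom (alternant l \<zeta> (\<lambda>a. q a + \<beta> a)) (\<Sum>a<l. \<beta> a))"
  define R where "R = smult (alternant l \<zeta> q) (1 - monom \<epsilon> n)"
  have PL: "P * L = R" unfolding P_def L_def R_def by (rule alternant_box_sum_poly[OF l \<zeta> q q0])
  have "fps_nth (fps_of_poly P) 0 = 1"
    by (simp add: P_def poly_0_coeff_0[symmetric] poly_prod)
  then have "fps_of_poly L = inverse (fps_of_poly P) * fps_of_poly R"
    using inverse_mult_eq_1[of "fps_of_poly P"]
    by (simp add: PL[symmetric] fps_of_poly_mult mult.assoc[symmetric])
  then have "coeff L e = (\<Sum>i=0..e. fps_nth (inverse (fps_of_poly P)) i * coeff R (e - i))"
    by (simp add: fps_mult_nth flip: fps_of_poly_nth)
  also have "\<dots> = (\<Sum>i=0..e. if i = e then fps_nth (inverse (fps_of_poly P)) i * alternant l \<zeta> q else 0)"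
    \<comment> \<open>\<open>R\<close> has no coefficients in degrees \<open>1, \<dots>, n - 1\<close>\<close>
    using e by (intro sum.cong refl) (auto simp: R_def coeff_monom)
  also have "\<dots> = complete_hom l \<zeta> e * alternant l \<zeta> q" by (simp add: complete_hom_def P_def)
  finally have "coeff L e = complete_hom l \<zeta> e * alternant l \<zeta> q" .
  moreover have "coeff L e = (\<Sum>\<beta>\<in>pieri_box l n q e. alternant l \<zeta> (\<lambda>a. q a + \<beta> a))"
    unfolding L_def pieri_box_def coeff_sum
    by (simp add: coeff_monom sum.inter_filter[symmetric] finite_PiE)
  ultimately show ?thesis by simp
qed

section \<open>Young diagrams as strictly decreasing sequences\<close>

definition shifted_parts :: "nat \<Rightarrow> nat list \<Rightarrow> nat \<Rightarrow> nat" where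
  "shifted_parts l L a = L ! a + (l - 1 - a)"

definition diagram_of_shifted :: "nat \<Rightarrow> (nat \<Rightarrow> nat) \<Rightarrow> nat list" where
  "diagram_of_shifted l Q = map (\<lambda>a. Q a - (l - 1 - a)) [0..<l]"

lemma shifted_parts_diagram_of:
  "strict_antimono_on {..<l} Q \<Longrightarrow> a < l \<Longrightarrow> shifted_parts l (diagram_of_shifted l Q) a = Q a"
  using strict_antimono_on_lower[of l Q a] by (simp add: shifted_parts_def diagram_of_shifted_def)

lemma ydiagD:
  assumes "L \<in> ydiag k l"
  shows "length L = l" and "\<And>i j. i \<le> j \<Longrightarrow> j < l \<Longrightarrow> L ! j \<le> L ! i"
    and "\<And>i. i < l \<Longrightarrow> L ! i \<le> k"
proof -
  show "length L = l" using assms by (simp add: ydiag_def)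
  show "\<And>i j. i \<le> j \<Longrightarrow> j < l \<Longrightarrow> L ! j \<le> L ! i"
  proof -
    fix i j assume "i \<le> j" "j < l"
    then show "L ! j \<le> L ! i"
      using assms by (cases "i = j") (auto simp: ydiag_def sorted_wrt_iff_nth_less)
  qed
  show "\<And>i. i < l \<Longrightarrow> L ! i \<le> k"
    using assms by (auto simp: ydiag_def)
qed

lemma diagram_of_shifted_parts: "L \<in> ydiag k l \<Longrightarrow> diagram_of_shifted l (shifted_parts l L) = L"
  using ydiagD(1)[of L k l] by (intro nth_equalityI) (auto simp: diagram_of_shifted_def shifted_parts_def)

lemma strict_antimono_shifted_parts:
  assumes "L \<in> ydiag k l" shows "strict_antimono_on {..<l} (shifted_parts l L)"
  unfolding strict_antimono_on_lessThan_iff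
proof (intro allI impI)
  fix a assume a: "Suc a < l"
  have "L ! Suc a \<le> L ! a" using ydiagD(2)[OF assms, of a "Suc a"] a by simp
  then show "shifted_parts l L (Suc a) < shifted_parts l L a" using a unfolding shifted_parts_def by arith
qed

lemma shifted_parts_less: "L \<in> ydiag k l \<Longrightarrow> a < l \<Longrightarrow> shifted_parts l L a < k + l"
  using ydiagD(3)[of L k l a] by (simp add: shifted_parts_def)

lemma diagram_of_shifted_ydiag:
  assumes "strict_antimono_on {..<l} Q" "Q 0 < k + l" "1 \<le> l"
  shows "diagram_of_shifted l Q \<in> ydiag k l"
proof -
  have le: "Q j + (j - i) \<le> Q i" if "i \<le> j" "j < l" for i j using strict_antimono_on_gap[OF assms(1) that] .
  have low: "l - 1 - a \<le> Q a" if "a < l" for a using strict_antimono_on_lower[OF assms(1) that] .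
  have "sorted_wrt (\<ge>) (diagram_of_shifted l Q)"
    unfolding sorted_wrt_iff_nth_less
  proof (intro allI impI)
    fix i j assume "i < j" "j < length (diagram_of_shifted l Q)"
    then have "j < l" by (simp add: diagram_of_shifted_def)
    then have "Q j + (j - i) \<le> Q i" using le \<open>i < j\<close> by simp
    then show "diagram_of_shifted l Q ! j \<le> diagram_of_shifted l Q ! i"
      using \<open>i < j\<close> \<open>j < l\<close> by (simp add: diagram_of_shifted_def)
  qed
  moreover have "\<forall>x\<in>set (diagram_of_shifted l Q). x \<le> k"
  proof
    fix x assume "x \<in> set (diagram_of_shifted l Q)"
    then obtain a where a: "a < l" "x = Q a - (l - 1 - a)" by (auto simp: diagram_of_shifted_def)
    have "Q a + a \<le> Q 0" using le[of 0 a] a by simp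
    then show "x \<le> k" using a assms(2) by simp
  qed
  ultimately show ?thesis by (simp add: ydiag_def diagram_of_shifted_def)
qed

lemma sum_shifted_parts:
  assumes "L \<in> ydiag k l"
  shows "(\<Sum>a<l. shifted_parts l L a) = sum_list L + (\<Sum>a<l. l - 1 - a)"
proof -
  have "sum_list L = (\<Sum>a<l. L ! a)"
    using ydiagD(1)[OF assms] by (simp add: sum_list_sum_nth atLeast0LessThan)
  then show ?thesis unfolding shifted_parts_def sum.distrib by simp
qed

definition pieri_classical :: "nat \<Rightarrow> nat \<Rightarrow> (nat \<Rightarrow> nat) \<Rightarrow> (nat \<Rightarrow> nat) \<Rightarrow> bool" where
  "pieri_classical l e q q' \<longleftrightarrow> (\<Sum>a<l. q' a) = (\<Sum>a<l. q a) + e \<and> (\<forall>j<l. q j \<le> q' j)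
      \<and> (\<forall>j. Suc j < l \<longrightarrow> q' (Suc j) < q j)"

definition pieri_quantum :: "nat \<Rightarrow> nat \<Rightarrow> nat \<Rightarrow> (nat \<Rightarrow> nat) \<Rightarrow> (nat \<Rightarrow> nat) \<Rightarrow> bool" where
  "pieri_quantum l n e q q' \<longleftrightarrow> (\<Sum>a<l. q' a) + n = (\<Sum>a<l. q a) + e \<and> (\<forall>j<l. q' j < q j)
      \<and> (\<forall>j. Suc j < l \<longrightarrow> q (Suc j) \<le> q' j)"

lemma pieri_coeff_iff_shifted:
  assumes L: "L \<in> ydiag k l" and M: "M \<in> ydiag k l"
  shows "pieri_coeff k l e L M \<longleftrightarrow>
    pieri_classical l e (shifted_parts l L) (shifted_parts l M) \<or> pieri_quantum l (k + l) e (shifted_parts l L) (shifted_parts l M)"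
proof -
  have s1: "(sum_list M = sum_list L + e) \<longleftrightarrow> (\<Sum>a<l. shifted_parts l M a) = (\<Sum>a<l. shifted_parts l L a) + e"
    using sum_shifted_parts[OF L] sum_shifted_parts[OF M] by simp
  have s2: "(sum_list M + (k + l) = sum_list L + e)
      \<longleftrightarrow> (\<Sum>a<l. shifted_parts l M a) + (k + l) = (\<Sum>a<l. shifted_parts l L a) + e"
    using sum_shifted_parts[OF L] sum_shifted_parts[OF M] by simp
  have c2: "(\<forall>j<l. L ! j \<le> M ! j) \<longleftrightarrow> (\<forall>j<l. shifted_parts l L j \<le> shifted_parts l M j)"
    by (simp only: shifted_parts_def add_le_cancel_right)
  have c3: "(\<forall>j. j + 1 < l \<longrightarrow> M ! (j + 1) \<le> L ! j)
      \<longleftrightarrow> (\<forall>j. Suc j < l \<longrightarrow> shifted_parts l M (Suc j) < shifted_parts l L j)"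
    by (auto simp: shifted_parts_def)
  have c4: "(\<forall>j<l. M ! j + 1 \<le> L ! j) \<longleftrightarrow> (\<forall>j<l. shifted_parts l M j < shifted_parts l L j)"
    by (auto simp: shifted_parts_def)
  have c5: "(\<forall>j. j + 1 < l \<longrightarrow> L ! (j + 1) \<le> M ! j + 1)
      \<longleftrightarrow> (\<forall>j. Suc j < l \<longrightarrow> shifted_parts l L (Suc j) \<le> shifted_parts l M j)"
    by (auto simp: shifted_parts_def)
  show ?thesis
    unfolding pieri_coeff_def pieri_classical_def pieri_quantum_def using M s1 s2 c2 c3 c4 c5 by simp
qed

text \<open>An exponent \<open>p\<^sub>0 \<ge> n\<close> may be reduced modulo \<open>n\<close> and moved to the last row; for
  \<open>\<zeta>\<^sub>b\<^sup>n = (-1)\<^sup>l\<^sup>-\<^sup>1\<close> the two signs this produces cancel.\<close>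

lemma alternant_rotate:
  fixes \<zeta> :: "nat \<Rightarrow> 'a::comm_ring_1"
  assumes l: "1 \<le> l" and roots: "\<And>b. b < l \<Longrightarrow> \<zeta> b ^ n = (-1) ^ (l - 1)" and p0: "n \<le> p 0"
  shows "alternant l \<zeta> p = alternant l \<zeta> (\<lambda>a. if Suc a < l then p (Suc a) else p 0 - n)"
proof -
  define \<epsilon> :: 'a where "\<epsilon> = (-1) ^ (l - 1)"
  define R where "R a = (if Suc a < l then p (Suc a) else p 0 - n)" for a
  have "alternant l \<zeta> p = leibniz_det l (\<lambda>a b. (if a = 0 then \<epsilon> else 1) * \<zeta> b ^ R (cyclic_shift l a))"
    unfolding alternant_def
  proof (rule leibniz_det_cong)
    fix a b assume a: "a < l" and b: "b < l"
    show "\<zeta> b ^ p a = (if a = 0 then \<epsilon> else 1) * \<zeta> b ^ R (cyclic_shift l a)"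
    proof (cases "a = 0")
      case True
      have "R (cyclic_shift l a) = p 0 - n" using True l by (simp add: R_def cyclic_shift_def)
      moreover have "\<zeta> b ^ p 0 = \<zeta> b ^ (p 0 - n) * \<zeta> b ^ n"
        using p0 by (simp add: power_add[symmetric])
      ultimately show ?thesis using True roots[OF b] by (simp add: \<epsilon>_def)
    next
      case False
      then have "R (cyclic_shift l a) = p a" using a by (simp add: R_def cyclic_shift_def)
      then show ?thesis using False by simp
    qed
  qed
  also have "\<dots> = (\<Prod>a<l. if a = 0 then \<epsilon> else 1) * leibniz_det l (\<lambda>a b. \<zeta> b ^ R (cyclic_shift l a))"
    by (rule leibniz_det_scale_rows)
  also have "leibniz_det l (\<lambda>a b. \<zeta> b ^ R (cyclic_shift l a)) = of_int (sign (cyclic_shift l)) * alternant l \<zeta> R"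
    unfolding alternant_def by (rule leibniz_det_permute_rows[OF cyclic_shift_permutes[OF l]])
  also have "(\<Prod>a<l. if a = 0 then \<epsilon> else 1) = \<epsilon>" using l by (simp add: prod.delta)
  finally have "alternant l \<zeta> p = \<epsilon> * ((-1) ^ (l - 1) * alternant l \<zeta> R)" using sign_cyclic_shift[OF l] by simp
  also have "\<dots> = alternant l \<zeta> R"
  proof -
    have "(-1) ^ (l - 1) * (-1) ^ (l - 1) = (1::'a)" by (simp add: power_add[symmetric])
    then show ?thesis unfolding \<epsilon>_def by (metis mult.assoc mult_1)
  qed
  finally show ?thesis unfolding R_def .
qed

context
  fixes k l :: nat and q :: "nat \<Rightarrow> nat" and e :: nat
  assumes l: "1 \<le> l" and q0: "q 0 < k + l"
begin

text \<open>\<open>box_shift \<beta>\<close> is \<open>q + \<beta>\<close>, re-sorted after reducing its first entry by \<open>n = k + l\<close> when it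
  has reached \<open>n\<close>; it is inverted by \<open>box_index\<close> on the diagrams of the Pieri expansion.\<close>

definition box_shift :: "(nat \<Rightarrow> nat) \<Rightarrow> nat \<Rightarrow> nat" where
  "box_shift \<beta> a = (if q 0 + \<beta> 0 < k + l then q a + \<beta> a
     else if Suc a < l then q (Suc a) + \<beta> (Suc a) else q 0 + \<beta> 0 - (k + l))"

definition box_index :: "nat list \<Rightarrow> nat \<Rightarrow> nat" where
  "box_index M = (if (\<Sum>a<l. shifted_parts l M a) = (\<Sum>a<l. q a) + e then (\<lambda>a\<in>{..<l}. shifted_parts l M a - q a)
     else (\<lambda>a\<in>{..<l}. if a = 0 then shifted_parts l M (l - 1) + (k + l) - q 0 else shifted_parts l M (a - 1) - q a))"

lemma pieri_box_bounds:
  assumes "\<beta> \<in> pieri_box l (k + l) q e"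
  shows "q 0 + \<beta> 0 < q (l - 1) + (k + l)" "\<And>a. 1 \<le> a \<Longrightarrow> a < l \<Longrightarrow> q a + \<beta> a < q (a - 1)"
    "(\<Sum>a<l. \<beta> a) = e"
proof -
  have b: "\<And>a. a < l \<Longrightarrow> \<beta> a < cyclic_gap l (k + l) q a"
    using assms unfolding pieri_box_def by (auto simp: PiE_iff)
  show "q 0 + \<beta> 0 < q (l - 1) + (k + l)" using b[of 0] l q0 by (simp add: cyclic_gap_def)
  show "\<And>a. 1 \<le> a \<Longrightarrow> a < l \<Longrightarrow> q a + \<beta> a < q (a - 1)"
  proof -
    fix a assume "1 \<le> a" "a < l"
    then show "q a + \<beta> a < q (a - 1)" using b[of a] by (simp add: cyclic_gap_def)
  qed
  show "(\<Sum>a<l. \<beta> a) = e" using assms by (simp add: pieri_box_def)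
qed

lemma box_shift_classical:
  assumes b: "\<beta> \<in> pieri_box l (k + l) q e" and c: "q 0 + \<beta> 0 < k + l"
  shows "strict_antimono_on {..<l} (box_shift \<beta>)" "box_shift \<beta> 0 < k + l" "pieri_classical l e q (box_shift \<beta>)"
proof -
  note bb = pieri_box_bounds[OF b]
  have Q: "\<And>a. box_shift \<beta> a = q a + \<beta> a" using c by (simp add: box_shift_def)
  show "strict_antimono_on {..<l} (box_shift \<beta>)" unfolding strict_antimono_on_lessThan_iff Q
  proof (intro allI impI)
    fix a assume "Suc a < l"
    then show "q (Suc a) + \<beta> (Suc a) < q a + \<beta> a" using bb(2)[of "Suc a"] by simp
  qed
  show "box_shift \<beta> 0 < k + l" using c Q by simp
  show "pieri_classical l e q (box_shift \<beta>)" unfolding pieri_classical_def Q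
  proof (intro conjI allI impI)
    show "(\<Sum>a<l. q a + \<beta> a) = (\<Sum>a<l. q a) + e" using bb(3) by (simp add: sum.distrib)
    fix j
    show "j < l \<Longrightarrow> q j \<le> q j + \<beta> j" by simp
    show "Suc j < l \<Longrightarrow> q (Suc j) + \<beta> (Suc j) < q j" using bb(2)[of "Suc j"] by simp
  qed
qed

lemma box_shift_quantum_ydiag:
  assumes b: "\<beta> \<in> pieri_box l (k + l) q e" and c: "\<not> q 0 + \<beta> 0 < k + l"
  shows "strict_antimono_on {..<l} (box_shift \<beta>)" "box_shift \<beta> 0 < k + l"
proof -
  note bb = pieri_box_bounds[OF b]
  have Q: "\<And>a. box_shift \<beta> a = (if Suc a < l then q (Suc a) + \<beta> (Suc a) else q 0 + \<beta> 0 - (k + l))"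
    using c by (simp add: box_shift_def)
  have last: "q 0 + \<beta> 0 - (k + l) < q (l - 1)" using bb(1) c by simp
  show "strict_antimono_on {..<l} (box_shift \<beta>)" unfolding strict_antimono_on_lessThan_iff
  proof (intro allI impI)
    fix a assume a: "Suc a < l"
    show "box_shift \<beta> (Suc a) < box_shift \<beta> a"
    proof (cases "Suc (Suc a) < l")
      case True
      then show ?thesis using bb(2)[of "Suc (Suc a)"] a by (simp add: Q)
    next
      case False
      then have "l - 1 = Suc a" using a by simp
      then show ?thesis using last a False by (simp add: Q)
    qed
  qed
  show "box_shift \<beta> 0 < k + l"
  proof (cases "1 < l")
    case True
    then show ?thesis using bb(2)[of 1] q0 by (simp add: Q)
  next
    case False
    then have "l = 1" using l by simp
    moreover have "box_shift \<beta> 0 = (if Suc 0 < l then q (Suc 0) + \<beta> (Suc 0) else q 0 + \<beta> 0 - (k + l))" by (rule Q)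
    ultimately show ?thesis using last q0 by simp
  qed
qed

lemma box_shift_quantum_pieri:
  assumes b: "\<beta> \<in> pieri_box l (k + l) q e" and c: "\<not> q 0 + \<beta> 0 < k + l"
  shows "pieri_quantum l (k + l) e q (box_shift \<beta>)"
proof -
  note bb = pieri_box_bounds[OF b]
  have Q: "\<And>a. box_shift \<beta> a = (if Suc a < l then q (Suc a) + \<beta> (Suc a) else q 0 + \<beta> 0 - (k + l))"
    using c by (simp add: box_shift_def)
  have last: "q 0 + \<beta> 0 - (k + l) < q (l - 1)" using bb(1) c by simp
  show "pieri_quantum l (k + l) e q (box_shift \<beta>)" unfolding pieri_quantum_def
  proof (intro conjI allI impI)
    obtain m where m: "l = Suc m" using l by (cases l) auto
    have s1: "(\<Sum>a<l. box_shift \<beta> a) = (\<Sum>a<m. q (Suc a) + \<beta> (Suc a)) + (q 0 + \<beta> 0 - (k + l))"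
    proof -
      have "(\<Sum>a<l. box_shift \<beta> a) = (\<Sum>a<m. box_shift \<beta> a) + box_shift \<beta> m" unfolding m by simp
      moreover have "box_shift \<beta> m = q 0 + \<beta> 0 - (k + l)" using Q[of m] m by simp
      moreover have "(\<Sum>a<m. box_shift \<beta> a) = (\<Sum>a<m. q (Suc a) + \<beta> (Suc a))"
        by (rule sum.cong) (use Q m in auto)
      ultimately show ?thesis by simp
    qed
    have s2: "(\<Sum>a<l. q a) = q 0 + (\<Sum>a<m. q (Suc a))" unfolding m by (rule sum.lessThan_Suc_shift)
    have s3: "(\<Sum>a<l. \<beta> a) = \<beta> 0 + (\<Sum>a<m. \<beta> (Suc a))" unfolding m by (rule sum.lessThan_Suc_shift)
    show "(\<Sum>a<l. box_shift \<beta> a) + (k + l) = (\<Sum>a<l. q a) + e"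
      using s1 s2 s3 bb(3) c by (simp add: sum.distrib)
    fix j
    show "j < l \<Longrightarrow> box_shift \<beta> j < q j"
    proof -
      assume j: "j < l"
      show "box_shift \<beta> j < q j"
      proof (cases "Suc j < l")
        case True then show ?thesis using bb(2)[of "Suc j"] by (simp add: Q)
      next
        case False then have "j = l - 1" using j by simp
        then show ?thesis using last False by (simp add: Q)
      qed
    qed
    show "Suc j < l \<Longrightarrow> q (Suc j) \<le> box_shift \<beta> j" by (simp add: Q)
  qed
qed

lemma pieri_classical_cong:
  assumes h: "\<And>a. a < l \<Longrightarrow> q1 a = q2 a" shows "pieri_classical l e q q1 = pieri_classical l e q q2"
proof -
  have s: "sum q1 {..<l} = sum q2 {..<l}" using h by (intro sum.cong) auto
  show ?thesis unfolding pieri_classical_def s using h by auto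
qed

lemma pieri_quantum_cong:
  assumes h: "\<And>a. a < l \<Longrightarrow> q1 a = q2 a" shows "pieri_quantum l (k + l) e q q1 = pieri_quantum l (k + l) e q q2"
proof -
  have s: "sum q1 {..<l} = sum q2 {..<l}" using h by (intro sum.cong) auto
  show ?thesis unfolding pieri_quantum_def s using h by auto
qed

lemma box_index_classical:
  assumes M: "M \<in> ydiag k l" and pc: "pieri_classical l e q (shifted_parts l M)"
  shows "box_index M \<in> pieri_box l (k + l) q e" "\<And>a. a < l \<Longrightarrow> box_shift (box_index M) a = shifted_parts l M a"
proof -
  let ?q' = "shifted_parts l M"
  have ps: "(\<Sum>a<l. ?q' a) = (\<Sum>a<l. q a) + e" and le: "\<And>j. j < l \<Longrightarrow> q j \<le> ?q' j"
    and lt: "\<And>j. Suc j < l \<Longrightarrow> ?q' (Suc j) < q j"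
    using pc unfolding pieri_classical_def by auto
  have bnd: "\<And>a. a < l \<Longrightarrow> ?q' a < k + l" using shifted_parts_less[OF M] by simp
  have IM: "box_index M = (\<lambda>a\<in>{..<l}. ?q' a - q a)" using ps by (simp add: box_index_def)
  show "box_index M \<in> pieri_box l (k + l) q e"
    unfolding pieri_box_def IM
  proof (intro CollectI conjI)
    show "(\<lambda>a\<in>{..<l}. ?q' a - q a) \<in> PiE {..<l} (\<lambda>a. {..<cyclic_gap l (k + l) q a})"
    proof (rule iffD2[OF restrict_PiE], rule Pi_I)
      fix a assume "a \<in> {..<l}"
      then have a: "a < l" by simp
      show "?q' a - q a \<in> {..<cyclic_gap l (k + l) q a}"
      proof (cases "a = 0")
        case True
        then show ?thesis using bnd[OF a] le[OF a] by (simp add: cyclic_gap_def)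
      next
        case False
        then have "?q' a < q (a - 1)" using lt[of "a - 1"] a by simp
        then show ?thesis using False le[OF a] by (simp add: cyclic_gap_def)
      qed
    qed
    have "(\<Sum>a<l. (\<lambda>a\<in>{..<l}. ?q' a - q a) a) = (\<Sum>a<l. ?q' a - q a)" by simp
    also have "\<dots> = (\<Sum>a<l. ?q' a) - (\<Sum>a<l. q a)"
      by (rule sum_subtractf_nat) (use le in simp)
    also have "\<dots> = e" using ps by simp
    finally show "(\<Sum>a<l. (\<lambda>a\<in>{..<l}. ?q' a - q a) a) = e" .
  qed
  show "\<And>a. a < l \<Longrightarrow> box_shift (box_index M) a = shifted_parts l M a"
  proof -
    fix a assume a: "a < l"
    have "q 0 + (box_index M) 0 < k + l" using IM le[of 0] bnd[of 0] l by simp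
    then show "box_shift (box_index M) a = shifted_parts l M a" using IM a le[OF a] by (simp add: box_shift_def)
  qed
qed

lemma box_index_quantum_in_box:
  assumes pq: "pieri_quantum l (k + l) e q (shifted_parts l M)"
  shows "box_index M \<in> pieri_box l (k + l) q e"
proof -
  let ?q' = "shifted_parts l M"
  have ps: "(\<Sum>a<l. ?q' a) + (k + l) = (\<Sum>a<l. q a) + e" and lt: "\<And>j. j < l \<Longrightarrow> ?q' j < q j"
    and le: "\<And>j. Suc j < l \<Longrightarrow> q (Suc j) \<le> ?q' j"
    using pq unfolding pieri_quantum_def by auto
  define \<beta> where "\<beta> = (\<lambda>a\<in>{..<l}. if a = 0 then ?q' (l - 1) + (k + l) - q 0 else ?q' (a - 1) - q a)"
  have IM: "box_index M = \<beta>" using ps l by (simp add: box_index_def \<beta>_def)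
  obtain m where m: "l = Suc m" using l by (cases l) auto
  show "box_index M \<in> pieri_box l (k + l) q e"
    unfolding pieri_box_def IM
  proof (intro CollectI conjI)
    show "\<beta> \<in> PiE {..<l} (\<lambda>a. {..<cyclic_gap l (k + l) q a})"
      unfolding \<beta>_def
    proof (rule iffD2[OF restrict_PiE], rule Pi_I)
      fix a assume "a \<in> {..<l}"
      then have a: "a < l" by simp
      show "(if a = 0 then ?q' (l - 1) + (k + l) - q 0 else ?q' (a - 1) - q a) \<in> {..<cyclic_gap l (k + l) q a}"
      proof (cases "a = 0")
        case True
        have "?q' (l - 1) < q (l - 1)" using lt[of "l - 1"] l by simp
        then show ?thesis using True q0 by (simp add: cyclic_gap_def)
      next
        case False
        have "?q' (a - 1) < q (a - 1)" using lt[of "a - 1"] a by simp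
        moreover have "q a \<le> ?q' (a - 1)" using le[of "a - 1"] a False by simp
        ultimately show ?thesis using False by (simp add: cyclic_gap_def)
      qed
    qed
    have s3: "(\<Sum>a<l. \<beta> a) = \<beta> 0 + (\<Sum>a<m. \<beta> (Suc a))" unfolding m by (rule sum.lessThan_Suc_shift)
    have b0: "\<beta> 0 = ?q' m + (k + l) - q 0" using m by (simp add: \<beta>_def)
    have bs: "(\<Sum>a<m. \<beta> (Suc a)) = (\<Sum>a<m. ?q' a - q (Suc a))"
      by (rule sum.cong) (use m in \<open>auto simp: \<beta>_def\<close>)
    have lem: "\<And>a. a \<in> {..<m} \<Longrightarrow> q (Suc a) \<le> ?q' a" using le m by simp
    have bs2: "(\<Sum>a<m. ?q' a - q (Suc a)) = (\<Sum>a<m. ?q' a) - (\<Sum>a<m. q (Suc a))"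
      by (rule sum_subtractf_nat) (use lem in simp)
    have bs3: "(\<Sum>a<m. q (Suc a)) \<le> (\<Sum>a<m. ?q' a)" by (rule sum_mono) (use lem in simp)
    have s1: "(\<Sum>a<l. ?q' a) = (\<Sum>a<m. ?q' a) + ?q' m" unfolding m by simp
    have s2: "(\<Sum>a<l. q a) = q 0 + (\<Sum>a<m. q (Suc a))" unfolding m by (rule sum.lessThan_Suc_shift)
    show "(\<Sum>a<l. \<beta> a) = e"
      using s3 b0 bs bs2 bs3 s1 s2 ps q0 by linarith
  qed
qed

lemma box_shift_box_index_quantum:
  assumes pq: "pieri_quantum l (k + l) e q (shifted_parts l M)" and a: "a < l"
  shows "box_shift (box_index M) a = shifted_parts l M a"
proof -
  let ?q' = "shifted_parts l M"
  have ps: "(\<Sum>a<l. ?q' a) + (k + l) = (\<Sum>a<l. q a) + e" and lt: "\<And>j. j < l \<Longrightarrow> ?q' j < q j"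
    and le: "\<And>j. Suc j < l \<Longrightarrow> q (Suc j) \<le> ?q' j"
    using pq unfolding pieri_quantum_def by auto
  define \<beta> where "\<beta> = (\<lambda>a\<in>{..<l}. if a = 0 then ?q' (l - 1) + (k + l) - q 0 else ?q' (a - 1) - q a)"
  have IM: "box_index M = \<beta>" using ps l by (simp add: box_index_def \<beta>_def)
  have b0: "\<beta> 0 = ?q' (l - 1) + (k + l) - q 0" using l by (simp add: \<beta>_def)
  then have nc: "\<not> q 0 + \<beta> 0 < k + l" using q0 by simp
  show ?thesis
  proof (cases "Suc a < l")
    case True
    have "\<beta> (Suc a) = ?q' a - q (Suc a)" using True by (simp add: \<beta>_def)
    then show ?thesis using nc True le[OF True] by (simp add: box_shift_def IM)
  next
    case False
    then have "a = l - 1" using a by simp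
    then show ?thesis using nc False b0 q0 by (simp add: box_shift_def IM)
  qed
qed

lemma box_shift_props:
  assumes b: "\<beta> \<in> pieri_box l (k + l) q e"
  shows "strict_antimono_on {..<l} (box_shift \<beta>)" "box_shift \<beta> 0 < k + l"
    "if q 0 + \<beta> 0 < k + l then pieri_classical l e q (box_shift \<beta>)
     else pieri_quantum l (k + l) e q (box_shift \<beta>)"
  using box_shift_classical[OF b] box_shift_quantum_ydiag[OF b] box_shift_quantum_pieri[OF b]
  by (cases "q 0 + \<beta> 0 < k + l"; simp)+

lemma box_index_box_shift:
  assumes b: "\<beta> \<in> pieri_box l (k + l) q e"
  shows "box_index (diagram_of_shifted l (box_shift \<beta>)) = \<beta>"
proof -
  let ?M = "diagram_of_shifted l (box_shift \<beta>)"
  have pe: "\<beta> \<in> PiE {..<l} (\<lambda>a. {..<cyclic_gap l (k + l) q a})" using b by (simp add: pieri_box_def)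
  note props = box_shift_props[OF b]
  have qvM: "\<And>a. a < l \<Longrightarrow> shifted_parts l ?M a = box_shift \<beta> a"
    using shifted_parts_diagram_of props(1) by blast
  have sumM: "(\<Sum>a<l. shifted_parts l ?M a) = (\<Sum>a<l. box_shift \<beta> a)" by (rule sum.cong) (simp_all add: qvM)
  show ?thesis
  proof (cases "q 0 + \<beta> 0 < k + l")
    case True
    then have "(\<Sum>a<l. shifted_parts l ?M a) = (\<Sum>a<l. q a) + e"
      using props(3) unfolding sumM pieri_classical_def by simp
    then have "box_index ?M = (\<lambda>a\<in>{..<l}. shifted_parts l ?M a - q a)" by (simp add: box_index_def)
    also have "\<dots> = (\<lambda>a\<in>{..<l}. \<beta> a)"
      by (rule restrict_ext) (simp add: qvM box_shift_def True)
    also have "\<dots> = \<beta>" using pe by (rule PiE_restrict)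
    finally show ?thesis .
  next
    case False
    then have "(\<Sum>a<l. shifted_parts l ?M a) \<noteq> (\<Sum>a<l. q a) + e"
      using props(3) l unfolding sumM pieri_quantum_def by simp
    then have "box_index ?M = (\<lambda>a\<in>{..<l}. if a = 0 then shifted_parts l ?M (l - 1) + (k + l) - q 0
        else shifted_parts l ?M (a - 1) - q a)"
      by (simp add: box_index_def)
    also have "\<dots> = (\<lambda>a\<in>{..<l}. \<beta> a)"
    proof (rule restrict_ext)
      fix a assume "a \<in> {..<l}"
      then have a: "a < l" by simp
      show "(if a = 0 then shifted_parts l ?M (l - 1) + (k + l) - q 0 else shifted_parts l ?M (a - 1) - q a) = \<beta> a"
      proof (cases "a = 0")
        case True
        have "shifted_parts l ?M (l - 1) = q 0 + \<beta> 0 - (k + l)"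
          using qvM[of "l - 1"] l False by (simp add: box_shift_def)
        then show ?thesis using True False by simp
      next
        case c: False
        have "shifted_parts l ?M (a - 1) = q a + \<beta> a" using qvM[of "a - 1"] a c False by (simp add: box_shift_def)
        then show ?thesis using c by simp
      qed
    qed
    also have "\<dots> = \<beta>" using pe by (rule PiE_restrict)
    finally show ?thesis .
  qed
qed

lemma alternant_box_shift:
  fixes \<zeta> :: "nat \<Rightarrow> 'a::comm_ring_1"
  assumes \<zeta>: "\<And>b. b < l \<Longrightarrow> \<zeta> b ^ (k + l) = (-1) ^ (l - 1)"
  shows "alternant l \<zeta> (box_shift \<beta>) = alternant l \<zeta> (\<lambda>a. q a + \<beta> a)"
proof (cases "q 0 + \<beta> 0 < k + l")
  case True then show ?thesis by (intro alternant_cong) (simp add: box_shift_def)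
next
  case False
  then have "alternant l \<zeta> (\<lambda>a. q a + \<beta> a)
      = alternant l \<zeta> (\<lambda>a. if Suc a < l then q (Suc a) + \<beta> (Suc a) else q 0 + \<beta> 0 - (k + l))"
    using alternant_rotate[where p="\<lambda>a. q a + \<beta> a", OF l \<zeta>] by simp
  also have "\<dots> = alternant l \<zeta> (box_shift \<beta>)" by (intro alternant_cong) (simp add: box_shift_def False)
  finally show ?thesis by simp
qed

lemma sum_pieri_box_alternant:
  fixes \<zeta> :: "nat \<Rightarrow> 'a::comm_ring_1"
  assumes \<zeta>: "\<And>b. b < l \<Longrightarrow> \<zeta> b ^ (k + l) = (-1) ^ (l - 1)"
  shows "(\<Sum>\<beta>\<in>pieri_box l (k + l) q e. alternant l \<zeta> (\<lambda>a. q a + \<beta> a))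
    = (\<Sum>M\<in>{M\<in>ydiag k l. pieri_classical l e q (shifted_parts l M) \<or> pieri_quantum l (k + l) e q (shifted_parts l M)}.
         alternant l \<zeta> (shifted_parts l M))"
proof (rule sum.reindex_bij_witness[where i = box_index and j = "\<lambda>\<beta>. diagram_of_shifted l (box_shift \<beta>)"])
  fix \<beta> assume b: "\<beta> \<in> pieri_box l (k + l) q e"
  let ?M = "diagram_of_shifted l (box_shift \<beta>)"
  note props = box_shift_props[OF b]
  have qvM: "\<And>a. a < l \<Longrightarrow> shifted_parts l ?M a = box_shift \<beta> a"
    using shifted_parts_diagram_of props(1) by blast
  show "box_index ?M = \<beta>" by (rule box_index_box_shift[OF b])
  show "?M \<in> {M\<in>ydiag k l. pieri_classical l e q (shifted_parts l M) \<or> pieri_quantum l (k + l) e q (shifted_parts l M)}"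
    using props l diagram_of_shifted_ydiag[OF props(1,2)]
      pieri_classical_cong[of "shifted_parts l ?M" "box_shift \<beta>"] pieri_quantum_cong[of "shifted_parts l ?M" "box_shift \<beta>"] qvM
    by (cases "q 0 + \<beta> 0 < k + l") auto
  have "alternant l \<zeta> (shifted_parts l ?M) = alternant l \<zeta> (box_shift \<beta>)" by (rule alternant_cong) (rule qvM)
  then show "alternant l \<zeta> (shifted_parts l ?M) = alternant l \<zeta> (\<lambda>a. q a + \<beta> a)"
    using alternant_box_shift[OF \<zeta>] by simp
next
  fix M assume "M \<in> {M\<in>ydiag k l. pieri_classical l e q (shifted_parts l M) \<or> pieri_quantum l (k + l) e q (shifted_parts l M)}"
  then have M: "M \<in> ydiag k l"
    and pp: "pieri_classical l e q (shifted_parts l M) \<or> pieri_quantum l (k + l) e q (shifted_parts l M)" by auto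
  have r: "box_index M \<in> pieri_box l (k + l) q e \<and> (\<forall>a<l. box_shift (box_index M) a = shifted_parts l M a)"
    using pp box_index_classical[OF M] box_index_quantum_in_box box_shift_box_index_quantum by blast
  then show "box_index M \<in> pieri_box l (k + l) q e" by blast
  have "diagram_of_shifted l (box_shift (box_index M)) = diagram_of_shifted l (shifted_parts l M)"
    using r by (simp add: diagram_of_shifted_def)
  also have "\<dots> = M" by (rule diagram_of_shifted_parts[OF M])
  finally show "diagram_of_shifted l (box_shift (box_index M)) = M" .
qed

end

lemma alternant_pieri:
  fixes \<zeta> :: "nat \<Rightarrow> 'a::field_char_0"
  assumes l: "1 \<le> l" and L: "L \<in> ydiag k l" and e: "e \<le> k"
    and \<zeta>: "\<And>b. b < l \<Longrightarrow> \<zeta> b ^ (k + l) = (-1) ^ (l - 1)"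
  shows "(\<Sum>M\<in>{M\<in>ydiag k l. pieri_coeff k l e L M}. alternant l \<zeta> (shifted_parts l M))
       = complete_hom l \<zeta> e * alternant l \<zeta> (shifted_parts l L)"
proof -
  let ?q = "shifted_parts l L"
  have q: "strict_antimono_on {..<l} ?q" by (rule strict_antimono_shifted_parts[OF L])
  have q0: "?q 0 < k + l" using shifted_parts_less[OF L, of 0] l by simp
  have "{M\<in>ydiag k l. pieri_coeff k l e L M}
      = {M\<in>ydiag k l. pieri_classical l e ?q (shifted_parts l M) \<or> pieri_quantum l (k + l) e ?q (shifted_parts l M)}"
    using pieri_coeff_iff_shifted[OF L] by blast
  then have "(\<Sum>M\<in>{M\<in>ydiag k l. pieri_coeff k l e L M}. alternant l \<zeta> (shifted_parts l M))
      = (\<Sum>\<beta>\<in>pieri_box l (k + l) ?q e. alternant l \<zeta> (\<lambda>a. ?q a + \<beta> a))"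
    using sum_pieri_box_alternant[where k = k and l = l and q = ?q, OF l q0 \<zeta>] by simp
  also have "\<dots> = complete_hom l \<zeta> e * alternant l \<zeta> ?q"
    using q0 e l by (intro alternant_box_sum[OF l \<zeta> q]) simp_all
  finally show ?thesis .
qed

section \<open>Orthogonality of alternants over tuples of roots\<close>

lemma strict_antimono_inv_permutes_eq_iff:
  fixes q q' :: "nat \<Rightarrow> 'a::linorder"
  assumes q: "strict_antimono_on {..<l} q" and q': "strict_antimono_on {..<l} q'"
    and \<sigma>: "\<sigma> permutes {..<l}" and \<tau>: "\<tau> permutes {..<l}"
  shows "(\<forall>b<l. q (inv \<sigma> b) = q' (inv \<tau> b)) \<longleftrightarrow> \<tau> = \<sigma> \<and> (\<forall>a<l. q a = q' a)"
proof
  assume h: "\<forall>b<l. q (inv \<sigma> b) = q' (inv \<tau> b)"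
  have \<rho>: "inv \<tau> \<circ> \<sigma> permutes {..<l}" using \<sigma> \<tau> by (intro permutes_compose permutes_inv)
  have eq: "q a = q' ((inv \<tau> \<circ> \<sigma>) a)" if "a < l" for a
    using h permutes_lessThan[OF \<sigma> that] permutes_inverses(2)[OF \<sigma>] by force
  have id: "inv \<tau> (\<sigma> a) = a" if "a < l" for a
    using strict_antimono_permute_eq_id[OF q q' \<rho> eq that] by simp
  have "\<sigma> = \<tau>"
  proof
    fix a show "\<sigma> a = \<tau> a"
      using id[of a] permutes_inverses(1)[OF \<tau>, of "\<sigma> a"] \<sigma> \<tau>
      by (cases "a < l") (auto simp: permutes_def)
  qed
  then show "\<tau> = \<sigma> \<and> (\<forall>a<l. q a = q' a)" using eq id by simp
next
  assume "\<tau> = \<sigma> \<and> (\<forall>a<l. q a = q' a)"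
  then show "\<forall>b<l. q (inv \<sigma> b) = q' (inv \<tau> b)"
    using permutes_lessThan[OF permutes_inv[OF \<sigma>]] by simp
qed

context
  fixes n :: nat and \<epsilon> :: complex
  assumes n: "1 < n" and \<epsilon>: "norm \<epsilon> = 1"
begin

lemma norm_nth_root: "z ^ n = \<epsilon> \<Longrightarrow> norm z = 1"
proof -
  assume "z ^ n = \<epsilon>"
  then have "norm z ^ n = 1 ^ n" using \<epsilon> by (simp add: norm_power[symmetric])
  then show "norm z = 1" using n by (subst (asm) power_eq_iff_eq_base) auto
qed

lemma cnj_mult_nth_root: "z ^ n = \<epsilon> \<Longrightarrow> cnj z * z = 1"
  using norm_nth_root complex_norm_square[of z] by (simp add: mult.commute)

lemma sum_nth_roots_power:
  assumes d: "0 < d" "d < n"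
  shows "(\<Sum>z | z ^ n = \<epsilon>. z ^ d) = 0"
proof -
  define \<xi> where "\<xi> = cis (2 * pi / real n)"
  have "\<xi> ^ n = cis (real n * (2 * pi / real n))" unfolding \<xi>_def by (rule Complex.DeMoivre)
  also have "real n * (2 * pi / real n) = 2 * pi" using n by simp
  finally have \<xi>n: "\<xi> ^ n = 1" by simp
  have \<xi>0: "\<xi> \<noteq> 0" by (simp add: \<xi>_def)
  have "\<xi> ^ d \<noteq> 1"
  proof
    assume "\<xi> ^ d = 1"
    have "inj_on (\<lambda>k. cis (2 * pi * real k / real n)) {..<n}"
      using Complex.bij_betw_roots_unity[of n] n by (simp add: bij_betw_def)
    moreover have "\<xi> ^ d = cis (real d * (2 * pi / real n))" unfolding \<xi>_def by (rule Complex.DeMoivre)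
    then have "cis (2 * pi * real d / real n) = cis (2 * pi * real 0 / real n)"
      using \<open>\<xi> ^ d = 1\<close> by (simp add: mult.commute)
    ultimately have "d = 0" using d n unfolding inj_on_def by (metis lessThan_iff less_trans zero_less_iff_neq_zero)
    with d show False by simp
  qed
  \<comment> \<open>the roots are permuted by multiplication with the primitive root of unity \<open>\<xi>\<close>\<close>
  have "(\<Sum>z | z ^ n = \<epsilon>. z ^ d) = (\<Sum>z | z ^ n = \<epsilon>. (\<xi> * z) ^ d)"
    by (rule sum.reindex_bij_witness[where i="\<lambda>z. \<xi> * z" and j="\<lambda>z. z / \<xi>"])
       (use \<xi>0 \<xi>n in \<open>auto simp: power_mult_distrib power_divide\<close>)
  also have "\<dots> = \<xi> ^ d * (\<Sum>z | z ^ n = \<epsilon>. z ^ d)" by (simp add: power_mult_distrib sum_distrib_left)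
  finally have "(1 - \<xi> ^ d) * (\<Sum>z | z ^ n = \<epsilon>. z ^ d) = 0" by (simp add: algebra_simps)
  with \<open>\<xi> ^ d \<noteq> 1\<close> show ?thesis by simp
qed

lemma sum_nth_roots_cnj_power:
  assumes "a < n" "b < n"
  shows "(\<Sum>z | z ^ n = \<epsilon>. cnj z ^ a * z ^ b) = (if a = b then of_nat n else 0)"
proof (cases "a \<le> b")
  case True
  have "(\<Sum>z | z ^ n = \<epsilon>. cnj z ^ a * z ^ b) = (\<Sum>z | z ^ n = \<epsilon>. z ^ (b - a))"
  proof (rule sum.cong[OF refl])
    fix z assume "z \<in> {z. z ^ n = \<epsilon>}"
    then have "cnj z * z = 1" by (simp add: cnj_mult_nth_root)
    moreover have "cnj z ^ a * z ^ b = (cnj z * z) ^ a * z ^ (b - a)"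
      using True by (simp add: power_mult_distrib power_add[symmetric])
    ultimately show "cnj z ^ a * z ^ b = z ^ (b - a)" by simp
  qed
  also have "\<dots> = (if a = b then of_nat n else 0)"
    using sum_nth_roots_power[of "b - a"] True assms card_nth_roots[of \<epsilon> n] n \<epsilon> by fastforce
  finally show ?thesis .
next
  case False
  have "(\<Sum>z | z ^ n = \<epsilon>. cnj z ^ a * z ^ b) = cnj (\<Sum>z | z ^ n = \<epsilon>. z ^ (a - b))"
    unfolding cnj_sum
  proof (rule sum.cong[OF refl])
    fix z assume "z \<in> {z. z ^ n = \<epsilon>}"
    then have "cnj z * z = 1" by (simp add: cnj_mult_nth_root)
    moreover have "cnj z ^ a * z ^ b = cnj z ^ (a - b) * (cnj z * z) ^ b"
      using False by (simp add: power_mult_distrib power_add[symmetric])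
    ultimately show "cnj z ^ a * z ^ b = cnj (z ^ (a - b))" by simp
  qed
  also have "\<dots> = 0" using sum_nth_roots_power[of "a - b"] False assms by simp
  finally show ?thesis using False by simp
qed

lemma sum_root_tuples_monomials:
  fixes u v :: "nat \<Rightarrow> nat"
  assumes u: "\<And>b. b < l \<Longrightarrow> u b < n" and v: "\<And>b. b < l \<Longrightarrow> v b < n"
  shows "(\<Sum>\<zeta>\<in>PiE {..<l} (\<lambda>_. {z. z ^ n = \<epsilon>}). \<Prod>b<l. cnj (\<zeta> b) ^ u b * \<zeta> b ^ v b)
       = (if \<forall>b<l. u b = v b then of_nat n ^ l else 0)"
proof -
  have "(\<Sum>\<zeta>\<in>PiE {..<l} (\<lambda>_. {z. z ^ n = \<epsilon>}). \<Prod>b<l. cnj (\<zeta> b) ^ u b * \<zeta> b ^ v b)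
      = (\<Prod>b<l. \<Sum>z | z ^ n = \<epsilon>. cnj z ^ u b * z ^ v b)"
    using n \<epsilon> by (intro prod_sum_PiE[symmetric]) (auto intro: finite_nth_roots)
  also have "\<dots> = (\<Prod>b<l. if u b = v b then of_nat n else 0)"
    using u v by (intro prod.cong refl sum_nth_roots_cnj_power) auto
  also have "\<dots> = (if \<forall>b<l. u b = v b then of_nat n ^ l else 0)"
    by (auto intro: prod_zero)
  finally show ?thesis .
qed

lemma sum_root_tuples_permuted_monomials:
  assumes \<sigma>: "\<sigma> permutes {..<l}" and \<tau>: "\<tau> permutes {..<l}"
    and q_less: "\<And>a. a < l \<Longrightarrow> q a < n" and q'_less: "\<And>a. a < l \<Longrightarrow> q' a < n"
  shows "(\<Sum>\<zeta>\<in>PiE {..<l} (\<lambda>_. {z. z ^ n = \<epsilon>}). (\<Prod>a<l. cnj (\<zeta> (\<sigma> a)) ^ q a) * (\<Prod>a<l. \<zeta> (\<tau> a) ^ q' a))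
       = (if \<forall>b<l. q (inv \<sigma> b) = q' (inv \<tau> b) then of_nat n ^ l else 0)"
proof -
  have \<sigma>': "inv \<sigma> permutes {..<l}" and \<tau>': "inv \<tau> permutes {..<l}" using \<sigma> \<tau> by (auto intro: permutes_inv)
  have "(\<Prod>a<l. cnj (\<zeta> (\<sigma> a)) ^ q a) * (\<Prod>a<l. \<zeta> (\<tau> a) ^ q' a)
      = (\<Prod>b<l. cnj (\<zeta> b) ^ q (inv \<sigma> b) * \<zeta> b ^ q' (inv \<tau> b))" for \<zeta>
    using prod.permute[OF \<sigma>', of "\<lambda>a. cnj (\<zeta> (\<sigma> a)) ^ q a"] permutes_inverses(1)[OF \<sigma>]
      prod.permute[OF \<tau>', of "\<lambda>a. \<zeta> (\<tau> a) ^ q' a"] permutes_inverses(1)[OF \<tau>]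
    by (simp add: o_def prod.distrib)
  then show ?thesis
    using \<sigma>' \<tau>' q_less q'_less by (simp add: permutes_lessThan sum_root_tuples_monomials)
qed

lemma alternant_orthogonality:
  assumes q: "strict_antimono_on {..<l} q" and q': "strict_antimono_on {..<l} q'"
    and q_less: "\<And>a. a < l \<Longrightarrow> q a < n" and q'_less: "\<And>a. a < l \<Longrightarrow> q' a < n"
  shows "(\<Sum>\<zeta>\<in>PiE {..<l} (\<lambda>_. {z. z ^ n = \<epsilon>}). cnj (alternant l \<zeta> q) * alternant l \<zeta> q')
       = (if \<forall>a<l. q a = q' a then fact l * of_nat n ^ l else 0)"
proof -
  let ?P = "{\<sigma>. \<sigma> permutes {..<l}}"
  let ?Z = "PiE {..<l} (\<lambda>_. {z. z ^ n = \<epsilon>})"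
  have "(\<Sum>\<zeta>\<in>?Z. cnj (alternant l \<zeta> q) * alternant l \<zeta> q')
      = (\<Sum>\<sigma>\<in>?P. \<Sum>\<tau>\<in>?P. of_int (sign \<sigma> * sign \<tau>) *
            (\<Sum>\<zeta>\<in>?Z. (\<Prod>a<l. cnj (\<zeta> (\<sigma> a)) ^ q a) * (\<Prod>a<l. \<zeta> (\<tau> a) ^ q' a)))"
    unfolding alternant_def leibniz_det_def cnj_sum sum_product
    by (simp add: sum_distrib_left sum.swap[of _ ?Z] algebra_simps)
  also have "\<dots> = (\<Sum>\<sigma>\<in>?P. \<Sum>\<tau>\<in>?P. if \<tau> = \<sigma> \<and> (\<forall>a<l. q a = q' a) then of_nat n ^ l else 0)"
  proof (intro sum.cong refl)
    fix \<sigma> \<tau> assume "\<sigma> \<in> ?P" "\<tau> \<in> ?P"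
    then have \<sigma>: "\<sigma> permutes {..<l}" and \<tau>: "\<tau> permutes {..<l}" by simp_all
    show "of_int (sign \<sigma> * sign \<tau>) * (\<Sum>\<zeta>\<in>?Z. (\<Prod>a<l. cnj (\<zeta> (\<sigma> a)) ^ q a) * (\<Prod>a<l. \<zeta> (\<tau> a) ^ q' a))
        = (if \<tau> = \<sigma> \<and> (\<forall>a<l. q a = q' a) then of_nat n ^ l else 0)"
      using sum_root_tuples_permuted_monomials[OF \<sigma> \<tau> q_less q'_less]
        strict_antimono_inv_permutes_eq_iff[OF q q' \<sigma> \<tau>]
      by (auto simp flip: of_int_mult)
  qed
  also have "\<dots> = (if \<forall>a<l. q a = q' a then fact l * of_nat n ^ l else 0)"
  proof (cases "\<forall>a<l. q a = q' a")
    case True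
    then show ?thesis by (simp add: finite_permutations card_permutations)
  next
    case False
    then have "(if \<tau> = \<sigma> \<and> (\<forall>a<l. q a = q' a) then of_nat n ^ l else 0) = (0::complex)"
      for \<sigma> \<tau> :: "nat \<Rightarrow> nat" by auto
    then show ?thesis by (simp only: if_not_P[OF False] sum.neutral_const)
  qed
  finally show ?thesis .
qed

end

section \<open>Points of the spectrum and the quantum Pieri rule\<close>

lemma finite_ydiag: "finite (ydiag k l)"
proof (rule finite_subset)
  show "ydiag k l \<subseteq> {M. set M \<subseteq> {..k} \<and> length M = l}" by (auto simp: ydiag_def)
  show "finite {M. set M \<subseteq> {..k} \<and> length M = l}" by (rule finite_lists_length_eq) simp
qed

lemma replicate_0_ydiag: "replicate l 0 \<in> ydiag k l"
  by (simp add: ydiag_def sorted_wrt_iff_nth_less)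

definition row_diagram :: "nat \<Rightarrow> nat \<Rightarrow> nat list" where
  "row_diagram l e = e # replicate (l - 1) 0"

lemma row_diagram_ydiag: "1 \<le> l \<Longrightarrow> e \<le> k \<Longrightarrow> row_diagram l e \<in> ydiag k l"
  using replicate_0_ydiag[of "l - 1" k] by (auto simp: row_diagram_def ydiag_def)

lemma pieri_coeff_0_iff:
  assumes L: "L \<in> ydiag k l" and M: "M \<in> ydiag k l" and l: "1 \<le> l"
  shows "pieri_coeff k l 0 L M \<longleftrightarrow> M = L"
proof
  assume "M = L"
  then show "pieri_coeff k l 0 L M"
    using M ydiagD(2)[OF L] by (auto simp: pieri_coeff_def)
next
  assume p: "pieri_coeff k l 0 L M"
  let ?q = "shifted_parts l L" and ?q' = "shifted_parts l M"
  have "pieri_classical l 0 ?q ?q' \<or> pieri_quantum l (k + l) 0 ?q ?q'" using p pieri_coeff_iff_shifted[OF L M] by simp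
  then show "M = L"
  proof
    assume c: "pieri_classical l 0 ?q ?q'"
    then have s: "(\<Sum>a<l. ?q' a) = (\<Sum>a<l. ?q a)" and le: "\<And>j. j < l \<Longrightarrow> ?q j \<le> ?q' j"
      by (auto simp: pieri_classical_def)
    have eq: "\<And>a. a < l \<Longrightarrow> ?q' a = ?q a"
    proof (rule ccontr)
      fix a assume a: "a < l" and ne: "?q' a \<noteq> ?q a"
      then have "?q a < ?q' a" using le[OF a] by simp
      then have "(\<Sum>a<l. ?q a) < (\<Sum>a<l. ?q' a)"
        using a by (intro sum_strict_mono_ex1) (auto intro: le)
      with s show False by simp
    qed
    have "M = diagram_of_shifted l ?q'" using diagram_of_shifted_parts[OF M] by simp
    also have "\<dots> = diagram_of_shifted l ?q" using eq by (simp add: diagram_of_shifted_def)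
    also have "\<dots> = L" by (rule diagram_of_shifted_parts[OF L])
    finally show ?thesis .
  next
    assume c: "pieri_quantum l (k + l) 0 ?q ?q'"
    then have s: "(\<Sum>a<l. ?q' a) + (k + l) = (\<Sum>a<l. ?q a)" and lt: "\<And>j. j < l \<Longrightarrow> ?q' j < ?q j"
      and le: "\<And>j. Suc j < l \<Longrightarrow> ?q (Suc j) \<le> ?q' j"
      by (auto simp: pieri_quantum_def)
    obtain m where m: "l = Suc m" using l by (cases l) auto
    have s1: "(\<Sum>a<l. ?q a) = ?q 0 + (\<Sum>a<m. ?q (Suc a))" unfolding m by (rule sum.lessThan_Suc_shift)
    have s2: "(\<Sum>a<l. ?q' a) = (\<Sum>a<m. ?q' a) + ?q' m" unfolding m by simp
    have s3: "(\<Sum>a<m. ?q (Suc a)) \<le> (\<Sum>a<m. ?q' a)" by (rule sum_mono) (use le m in simp)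
    have "?q 0 < k + l" using shifted_parts_less[OF L, of 0] l by simp
    then show ?thesis using s s1 s2 s3 by simp
  qed
qed

lemma special_op_zero: "special_op k l e (\<lambda>_. 0 :: 'a::comm_ring_1) = (\<lambda>_. 0)"
  by (rule ext) (simp add: special_op_def)

lemma foldr_eq_zero:
  assumes "i \<in> set xs" "\<And>acc. g i acc = (\<lambda>_. 0 :: 'a::comm_ring_1)" "\<And>j. g j (\<lambda>_. 0) = (\<lambda>_. 0)"
  shows "foldr g xs Y = (\<lambda>_. 0)"
  using assms(1)
proof (induction xs)
  case Nil then show ?case by simp
next
  case (Cons x xs)
  show ?case
  proof (cases "x = i")
    case True then show ?thesis using assms(2) by simp
  next
    case False
    then have "i \<in> set xs" using Cons.prems by simp
    then show ?thesis using Cons.IH assms(3) by simp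
  qed
qed

lemma special_op_0:
  assumes l: "1 \<le> l" and nu: "\<nu> \<in> ydiag k l"
  shows "special_op k l 0 Y \<nu> = Y \<nu>"
proof -
  have "special_op k l 0 Y \<nu> = (\<Sum>L\<in>ydiag k l. if pieri_coeff k l 0 L \<nu> then Y L else 0)"
    by (simp add: special_op_def)
  also have "\<dots> = (\<Sum>L\<in>ydiag k l. if L = \<nu> then Y L else 0)"
    by (intro sum.cong refl) (use pieri_coeff_0_iff nu l in auto)
  also have "\<dots> = Y \<nu>" using nu finite_ydiag by simp
  finally show ?thesis .
qed

lemma special_op_cong:
  assumes "\<And>L. L \<in> ydiag k l \<Longrightarrow> Y L = Z L"
  shows "special_op k l e Y = special_op k l e Z"
  unfolding special_op_def by (rule ext) (intro if_cong refl sum.cong, simp add: assms)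

lemma foldr_special_op_0:
  assumes l: "1 \<le> l" and "\<forall>i\<in>set xs. f i = 0"
  shows "\<nu> \<in> ydiag k l \<Longrightarrow> foldr (\<lambda>i acc. special_op k l (f i) acc) xs Y \<nu> = Y \<nu>"
  using assms(2)
proof (induction xs arbitrary: \<nu>)
  case Nil then show ?case by simp
next
  case (Cons x xs)
  have "foldr (\<lambda>i acc. special_op k l (f i) acc) (x # xs) Y \<nu>
      = special_op k l 0 (foldr (\<lambda>i acc. special_op k l (f i) acc) xs Y) \<nu>"
    using Cons.prems by simp
  also have "\<dots> = foldr (\<lambda>i acc. special_op k l (f i) acc) xs Y \<nu>"
    by (rule special_op_0[OF l Cons.prems(1)])
  also have "\<dots> = Y \<nu>" using Cons by simp
  finally show ?case .
qed

text \<open>In the Giambelli determinant of a one-row diagram every term but the diagonal one contains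
  a factor \<open>S\<^sub>(\<^sub>e\<^sub>)\<close> with \<open>e < 0\<close>, which is zero.\<close>

lemma giambelli_op_row:
  fixes Y :: "nat list \<Rightarrow> 'a::comm_ring_1"
  assumes l: "1 \<le> l" and e: "e \<le> k"
  shows "giambelli_op k l (row_diagram l e) Y = special_op k l (int e) Y"
proof (rule ext)
  fix \<mu>
  let ?R = "row_diagram l e"
  define F where "F w = foldr (\<lambda>i acc. special_op k l (int (?R ! i) + int (w i) - int i) acc) [0..<l] Y" for w :: "nat \<Rightarrow> nat"
  have P: "finite {w. w permutes {..<l}}" by (simp add: finite_permutations)
  have zero: "F w = (\<lambda>_. 0)" if w: "w permutes {..<l}" and ne: "w \<noteq> id" for w
  proof -
    have "\<exists>i<l. w i < i" by (rule permutes_lessThan_descent[OF w ne])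
    then obtain i where i: "i < l" "w i < i" by blast
    then have i0: "i \<noteq> 0" by simp
    have Ri: "?R ! i = 0" using i i0 by (simp add: row_diagram_def nth_Cons')
    show ?thesis unfolding F_def
    proof (rule foldr_eq_zero[where i=i])
      show "i \<in> set [0..<l]" using i by simp
      show "\<And>acc. special_op k l (int (?R ! i) + int (w i) - int i) acc = (\<lambda>_. 0)"
        using Ri i by (simp add: special_op_def)
      show "\<And>j. special_op k l (int (?R ! j) + int (w j) - int j) (\<lambda>_. 0) = (\<lambda>_. 0)"
        by (rule special_op_zero)
    qed
  qed
  have "giambelli_op k l ?R Y \<mu> = (\<Sum>w\<in>{w. w permutes {..<l}}. of_int (sign w) * F w \<mu>)"
    by (simp add: giambelli_op_def F_def)
  also have "\<dots> = of_int (sign (id :: nat \<Rightarrow> nat)) * F id \<mu>"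
    using P zero by (subst sum.remove[of _ id]) (auto intro!: sum.neutral)
  also have "\<dots> = F id \<mu>" by simp
  also have "F id = special_op k l (int e) (foldr (\<lambda>i acc. special_op k l (int (?R ! i) + int i - int i) acc) [1..<l] Y)"
  proof -
    have "[0..<l] = 0 # [1..<l]" using l by (simp add: upt_rec)
    then show ?thesis by (simp add: F_def row_diagram_def)
  qed
  also have "\<dots> = special_op k l (int e) Y"
  proof (rule special_op_cong)
    fix L assume "L \<in> ydiag k l"
    show "foldr (\<lambda>i acc. special_op k l (int (?R ! i) + int i - int i) acc) [1..<l] Y L = Y L"
      by (rule foldr_special_op_0[OF l _ \<open>L \<in> ydiag k l\<close>]) (auto simp: row_diagram_def nth_Cons')
  qed
  finally show "giambelli_op k l ?R Y \<mu> = special_op k l (int e) Y \<mu>" by simp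
qed

lemma evalpt_schub:
  assumes L: "L \<in> ydiag k l" shows "evalpt k l p (schub L) = p L"
proof -
  have "evalpt k l p (schub L) = (\<Sum>lam\<in>ydiag k l. if lam = L then p lam else 0)"
    unfolding evalpt_def schub_def by (intro sum.cong) auto
  also have "\<dots> = p L" using L finite_ydiag[of k l] by simp
  finally show ?thesis .
qed

lemma supported_schub: "L \<in> ydiag k l \<Longrightarrow> supported k l (schub L :: nat list \<Rightarrow> 'a::zero_neq_one)"
  by (auto simp: supported_def schub_def)

lemma qprod_schub_row_diagram:
  assumes l: "1 \<le> l" and e: "e \<le> k"
  shows "qprod k l (schub (row_diagram l e)) (schub L) = special_op k l (int e) (schub L :: nat list \<Rightarrow> 'a::comm_ring_1)"
proof
  fix \<nu>
  have "qprod k l (schub (row_diagram l e)) (schub L :: nat list \<Rightarrow> 'a) \<nu>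
      = (\<Sum>lam\<in>ydiag k l. if lam = row_diagram l e then giambelli_op k l lam (schub L :: nat list \<Rightarrow> 'a) \<nu> else 0)"
    unfolding qprod_def schub_def by (intro sum.cong) auto
  also have "\<dots> = special_op k l (int e) (schub L) \<nu>"
    using row_diagram_ydiag[OF l e] finite_ydiag by (simp add: giambelli_op_row[OF l e])
  finally show "qprod k l (schub (row_diagram l e)) (schub L :: nat list \<Rightarrow> 'a) \<nu> = special_op k l (int e) (schub L) \<nu>" .
qed

lemma evalpt_special_op_schub:
  assumes L: "L \<in> ydiag k l" and e: "e \<le> k"
  shows "evalpt k l p (special_op k l (int e) (schub L)) = (\<Sum>M\<in>{M\<in>ydiag k l. pieri_coeff k l e L M}. p M)"
proof -
  have "special_op k l (int e) (schub L) \<nu> = (if pieri_coeff k l e L \<nu> then 1 else 0 :: complex)" for \<nu>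
  proof -
    have "special_op k l (int e) (schub L) \<nu>
        = (\<Sum>lam\<in>ydiag k l. if pieri_coeff k l e lam \<nu> then (if lam = L then 1 else 0) else (0::complex))"
      using e by (simp add: special_op_def schub_def)
    also have "\<dots> = (\<Sum>lam\<in>ydiag k l. if lam = L then (if pieri_coeff k l e lam \<nu> then 1 else 0) else 0)"
      by (intro sum.cong) auto
    finally show ?thesis using L finite_ydiag by simp
  qed
  then have "evalpt k l p (special_op k l (int e) (schub L)) = (\<Sum>\<nu>\<in>ydiag k l. if pieri_coeff k l e L \<nu> then p \<nu> else 0)"
    unfolding evalpt_def by (intro sum.cong) auto
  then show ?thesis by (simp add: sum.inter_filter[OF finite_ydiag])
qed

lemma spec_point_pieri:
  assumes p: "spec_point k l p" and l: "1 \<le> l" and e: "e \<le> k" and L: "L \<in> ydiag k l"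
  shows "(\<Sum>M\<in>{M\<in>ydiag k l. pieri_coeff k l e L M}. p M) = p (row_diagram l e) * p L"
proof -
  have R: "row_diagram l e \<in> ydiag k l" by (rule row_diagram_ydiag[OF l e])
  have "evalpt k l p (qprod k l (schub (row_diagram l e)) (schub L))
      = evalpt k l p (schub (row_diagram l e)) * evalpt k l p (schub L)"
    using p supported_schub[OF R] supported_schub[OF L] unfolding spec_point_def by blast
  then show ?thesis
    using evalpt_special_op_schub[OF L e] evalpt_schub[OF L] evalpt_schub[OF R]
    by (simp add: qprod_schub_row_diagram[OF l e])
qed

lemma spec_point_empty: "spec_point k l p \<Longrightarrow> p (replicate l 0) = 1"
  using evalpt_schub[OF replicate_0_ydiag[of l k], of p] by (simp add: spec_point_def)

section \<open>Points of the spectrum are normalised alternants\<close>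

lemma ydiag_eq_replicate_0: "L \<in> ydiag k l \<Longrightarrow> L ! 0 = 0 \<Longrightarrow> L = replicate l 0"
  by (intro nth_equalityI) (auto simp: ydiagD(1) dest: ydiagD(2)[of L k l 0])

lemma ydiag_Cons_shift: "x # xs \<in> ydiag k l \<Longrightarrow> xs @ [0] \<in> ydiag k l"
  by (auto simp: ydiag_def sorted_wrt_append)

lemma pieri_coeff_Cons_shift:
  assumes L: "x # xs \<in> ydiag k l"
  shows "pieri_coeff k l x (xs @ [0]) (x # xs)"
  unfolding pieri_coeff_def
proof (intro conjI disjI1)
  have len: "length xs + 1 = l" using ydiagD(1)[OF L] by simp
  show "x # xs \<in> ydiag k l" by fact
  show "sum_list (x # xs) = sum_list (xs @ [0]) + x" by simp
  show "\<forall>j<l. (xs @ [0]) ! j \<le> (x # xs) ! j"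
  proof (intro allI impI)
    fix j assume j: "j < l"
    show "(xs @ [0]) ! j \<le> (x # xs) ! j"
    proof (cases "j < length xs")
      case True
      then show ?thesis using ydiagD(2)[OF L, of j "Suc j"] len by (simp add: nth_append)
    qed (use j len in \<open>simp add: nth_append\<close>)
  qed
  show "\<forall>j. j + 1 < l \<longrightarrow> (x # xs) ! (j + 1) \<le> (xs @ [0]) ! j"
    using len by (simp add: nth_append)
qed

lemma pieri_coeff_Cons_shift_other:
  assumes L: "x # xs \<in> ydiag k l" and M: "M \<in> ydiag k l"
    and p: "pieri_coeff k l x (xs @ [0]) M" and ne: "M \<noteq> x # xs"
  shows "sum_list M < sum_list (x # xs) \<or> sum_list M = sum_list (x # xs) \<and> x < M ! 0"
proof -
  let ?\<nu> = "xs @ [0]"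
  have lxs: "length xs + 1 = l" using ydiagD(1)[OF L] by simp
  from p consider (quantum) "sum_list M + (k + l) = sum_list ?\<nu> + x"
    | (classical) "sum_list M = sum_list ?\<nu> + x" "\<forall>j. j + 1 < l \<longrightarrow> M ! (j + 1) \<le> ?\<nu> ! j"
    unfolding pieri_coeff_def by blast
  then show ?thesis
  proof cases
    case quantum
    then show ?thesis using lxs by simp
  next
    case classical
    obtain y ys where My: "M = y # ys" using ydiagD(1)[OF M] lxs by (cases M) auto
    have lys: "length ys = length xs" using ydiagD(1)[OF M] lxs My by simp
    have le: "ys ! j \<le> xs ! j" if "j < length xs" for j
      using classical(2) that lxs by (auto simp: My nth_append)
    have sums: "y + sum_list ys = x + sum_list xs" using classical(1) My by simp
    have "x < y"
    proof (rule ccontr)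
      assume "\<not> x < y"
      moreover have "sum_list ys \<le> sum_list xs"
        using lys by (simp add: sum_list_sum_nth atLeast0LessThan) (rule sum_mono, simp add: le)
      ultimately have "y = x" and eq: "sum_list ys = sum_list xs" using sums by simp_all
      moreover have "ys = xs"
      proof (rule nth_equalityI)
        show "length ys = length xs" by (rule lys)
        fix j assume j: "j < length ys"
        show "ys ! j = xs ! j"
        proof (rule ccontr)
          assume "ys ! j \<noteq> xs ! j"
          then have "ys ! j < xs ! j" using le[of j] j lys by simp
          then have "(\<Sum>j<length xs. ys ! j) < (\<Sum>j<length xs. xs ! j)"
            using j lys by (intro sum_strict_mono_ex1) (auto intro: le)
          then show False using eq lys by (simp add: sum_list_sum_nth atLeast0LessThan)
        qed
      qed
      ultimately show False using ne My by simp
    qed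
    then show ?thesis using sums My by simp
  qed
qed

text \<open>The Pieri equation for \<open>S\<^sub>(\<^sub>x\<^sub>) * S\<^sub>\<nu>\<close>, with \<open>x = L\<^sub>1\<close> and \<open>\<nu>\<close> the diagram \<open>L\<close> without
  its first row, expresses \<open>v L\<close> by values at diagrams that are smaller or have a longer first
  row; hence induction on \<open>|L|\<close> and then on \<open>k - L\<^sub>1\<close>.\<close>

lemma pieri_eigenvector_eq_0:
  fixes v :: "nat list \<Rightarrow> 'a::comm_ring_1"
  assumes l: "1 \<le> l"
    and eig: "\<And>e L. 1 \<le> e \<Longrightarrow> e \<le> k \<Longrightarrow> L \<in> ydiag k l \<Longrightarrow>
       (\<Sum>M\<in>{M\<in>ydiag k l. pieri_coeff k l e L M}. v M) = y e * v L"
    and v0: "v (replicate l 0) = 0"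
  shows "L \<in> ydiag k l \<Longrightarrow> v L = 0"
proof (induction L rule: measure_induct_rule[where f="\<lambda>L. sum_list L * (k + 1) + (k - L ! 0)"])
  case (less L)
  note L = less.prems
  show ?case
  proof (cases "L ! 0 = 0")
    case True then show ?thesis using ydiag_eq_replicate_0[OF L] v0 by simp
  next
    case False
    obtain x xs where Lx: "L = x # xs" using ydiagD(1)[OF L] l by (cases L) auto
    have x: "1 \<le> x" "x \<le> k" using False ydiagD(3)[OF L, of 0] l Lx by auto
    have \<nu>: "xs @ [0] \<in> ydiag k l" using ydiag_Cons_shift L Lx by simp
    have "v (xs @ [0]) = 0"
    proof (rule less.IH[OF _ \<nu>])
      have "k \<le> k * x" using x by simp
      moreover have "x * (k + 1) = x + k * x" by (simp add: algebra_simps)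
      moreover have "k - (xs @ [0]) ! 0 \<le> k" by simp
      ultimately have "k - (xs @ [0]) ! 0 < x * (k + 1)" using x by linarith
      then show "sum_list (xs @ [0]) * (k + 1) + (k - (xs @ [0]) ! 0) < sum_list L * (k + 1) + (k - L ! 0)"
        using Lx by (simp add: algebra_simps)
    qed
    moreover have "v M = 0"
      if M: "M \<in> ydiag k l" "pieri_coeff k l x (xs @ [0]) M" "M \<noteq> L" for M
    proof (rule less.IH[OF _ M(1)])
      have "M ! 0 \<le> k" using ydiagD(3)[OF M(1), of 0] l by simp
      moreover have "sum_list M + 1 \<le> sum_list L \<or> sum_list M = sum_list L \<and> L ! 0 < M ! 0"
        using pieri_coeff_Cons_shift_other[of x xs k l M] L M Lx by auto
      ultimately show "sum_list M * (k + 1) + (k - M ! 0) < sum_list L * (k + 1) + (k - L ! 0)"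
      proof (elim disjE conjE)
        assume "sum_list M + 1 \<le> sum_list L"
        then have "(sum_list M + 1) * (k + 1) \<le> sum_list L * (k + 1)" by (rule mult_right_mono) simp
        then show ?thesis by (simp add: algebra_simps)
      qed simp
    qed
    ultimately have "(\<Sum>M\<in>{M\<in>ydiag k l. pieri_coeff k l x (xs @ [0]) M}. v M) = v L"
      using pieri_coeff_Cons_shift[of x xs k l] L Lx finite_ydiag
      by (subst sum.remove[of _ L]) (auto intro!: sum.neutral)
    moreover have "(\<Sum>M\<in>{M\<in>ydiag k l. pieri_coeff k l x (xs @ [0]) M}. v M) = y x * v (xs @ [0])"
      by (rule eig[OF x \<nu>])
    ultimately show ?thesis using \<open>v (xs @ [0]) = 0\<close> by simp
  qed
qed

text \<open>Applying the operator \<open>\<Prod>\<^sub>\<eta> (T\<^bsub>f \<eta>\<^esub> - s \<eta>)\<close> to a combination of joint eigenvectors.\<close>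

lemma eigenvector_combination_prod:
  fixes u :: "'z \<Rightarrow> 'd \<Rightarrow> 'a::field" and p :: "'d \<Rightarrow> 'a"
  assumes u: "\<And>\<zeta> e L. \<zeta> \<in> Z \<Longrightarrow> e \<in> E \<Longrightarrow> L \<in> D \<Longrightarrow>
      (\<Sum>M\<in>{M\<in>D. R e L M}. u \<zeta> M) = y \<zeta> e * u \<zeta> L"
    and p: "\<And>e L. e \<in> E \<Longrightarrow> L \<in> D \<Longrightarrow> (\<Sum>M\<in>{M\<in>D. R e L M}. p M) = x e * p L"
    and span: "\<And>\<mu>. \<mu> \<in> D \<Longrightarrow> (\<Sum>\<zeta>\<in>Z. c \<zeta> * u \<zeta> \<mu>) = p \<mu>"
    and T: "finite T" "f ` T \<subseteq> E"
  shows "\<mu> \<in> D \<Longrightarrow>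
    (\<Sum>\<zeta>\<in>Z. c \<zeta> * (\<Prod>\<eta>\<in>T. y \<zeta> (f \<eta>) - s \<eta>) * u \<zeta> \<mu>) = (\<Prod>\<eta>\<in>T. x (f \<eta>) - s \<eta>) * p \<mu>"
  using T
proof (induction T arbitrary: \<mu> rule: finite_induct)
  case empty
  then show ?case using span by simp
next
  case (insert \<eta>0 T)
  define e where "e = f \<eta>0"
  have e: "e \<in> E" using insert.prems by (simp add: e_def)
  define P where "P \<zeta> = (\<Prod>\<eta>\<in>T. y \<zeta> (f \<eta>) - s \<eta>)" for \<zeta>
  have IH: "(\<Sum>\<zeta>\<in>Z. c \<zeta> * P \<zeta> * u \<zeta> \<nu>) = (\<Prod>\<eta>\<in>T. x (f \<eta>) - s \<eta>) * p \<nu>"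
    if "\<nu> \<in> D" for \<nu>
    using insert.IH[OF that] insert.prems by (simp add: P_def)
  have "(\<Sum>\<zeta>\<in>Z. c \<zeta> * (\<Prod>\<eta>\<in>insert \<eta>0 T. y \<zeta> (f \<eta>) - s \<eta>) * u \<zeta> \<mu>)
      = (\<Sum>\<zeta>\<in>Z. c \<zeta> * P \<zeta> * (y \<zeta> e * u \<zeta> \<mu>)) - s \<eta>0 * (\<Sum>\<zeta>\<in>Z. c \<zeta> * P \<zeta> * u \<zeta> \<mu>)"
    using insert.hyps by (simp add: P_def e_def sum_subtractf sum_distrib_left algebra_simps)
  also have "(\<Sum>\<zeta>\<in>Z. c \<zeta> * P \<zeta> * (y \<zeta> e * u \<zeta> \<mu>))
      = (\<Sum>\<zeta>\<in>Z. c \<zeta> * P \<zeta> * (\<Sum>M\<in>{M\<in>D. R e \<mu> M}. u \<zeta> M))"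
    by (intro sum.cong refl) (simp add: u[OF _ e insert.prems(1)])
  also have "\<dots> = (\<Sum>M\<in>{M\<in>D. R e \<mu> M}. \<Sum>\<zeta>\<in>Z. c \<zeta> * P \<zeta> * u \<zeta> M)"
    by (simp add: sum_distrib_left sum.swap[of _ Z])
  also have "\<dots> = (\<Prod>\<eta>\<in>T. x (f \<eta>) - s \<eta>) * (x e * p \<mu>)"
    using IH p[OF e insert.prems(1)] by (simp add: sum_distrib_left[symmetric])
  also have "(\<Sum>\<zeta>\<in>Z. c \<zeta> * P \<zeta> * u \<zeta> \<mu>) = (\<Prod>\<eta>\<in>T. x (f \<eta>) - s \<eta>) * p \<mu>"
    by (rule IH[OF insert.prems(1)])
  also have "(\<Prod>\<eta>\<in>T. x (f \<eta>) - s \<eta>) * (x e * p \<mu>) - s \<eta>0 * ((\<Prod>\<eta>\<in>T. x (f \<eta>) - s \<eta>) * p \<mu>)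
      = (\<Prod>\<eta>\<in>insert \<eta>0 T. x (f \<eta>) - s \<eta>) * p \<mu>"
    using insert.hyps by (simp add: e_def algebra_simps)
  finally show ?case .
qed

text \<open>If no \<open>u \<zeta>\<close> with \<open>c \<zeta> \<noteq> 0\<close> had the eigenvalues of \<open>p\<close>, choose for each such \<open>\<zeta>\<close> an operator
  \<open>T\<^bsub>f \<zeta>\<^esub>\<close> separating them; then \<open>\<Prod>\<^sub>\<zeta> (T\<^bsub>f \<zeta>\<^esub> - y \<zeta> (f \<zeta>))\<close> kills the combination but not \<open>p\<close>.\<close>

lemma eigenvector_in_span_of_eigenvectors:
  fixes u :: "'z \<Rightarrow> 'd \<Rightarrow> 'a::field" and p :: "'d \<Rightarrow> 'a"
  assumes Z: "finite Z"
    and u: "\<And>\<zeta> e L. \<zeta> \<in> Z \<Longrightarrow> e \<in> E \<Longrightarrow> L \<in> D \<Longrightarrow>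
      (\<Sum>M\<in>{M\<in>D. R e L M}. u \<zeta> M) = y \<zeta> e * u \<zeta> L"
    and p: "\<And>e L. e \<in> E \<Longrightarrow> L \<in> D \<Longrightarrow> (\<Sum>M\<in>{M\<in>D. R e L M}. p M) = x e * p L"
    and span: "\<And>\<mu>. \<mu> \<in> D \<Longrightarrow> (\<Sum>\<zeta>\<in>Z. c \<zeta> * u \<zeta> \<mu>) = p \<mu>"
    and \<mu>0: "\<mu>0 \<in> D" "p \<mu>0 \<noteq> 0"
  shows "\<exists>\<zeta>\<in>Z. c \<zeta> \<noteq> 0 \<and> (\<forall>e\<in>E. y \<zeta> e = x e)"
proof (rule ccontr)
  assume none: "\<not> ?thesis"
  define S where "S = {\<zeta>\<in>Z. c \<zeta> \<noteq> 0}"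
  have "finite S" using Z by (simp add: S_def)
  have "\<forall>\<zeta>\<in>S. \<exists>e\<in>E. y \<zeta> e \<noteq> x e" using none by (auto simp: S_def)
  then obtain f where f: "\<And>\<zeta>. \<zeta> \<in> S \<Longrightarrow> f \<zeta> \<in> E \<and> y \<zeta> (f \<zeta>) \<noteq> x (f \<zeta>)" by metis
  then have fS: "f ` S \<subseteq> E" by auto
  have "(\<Sum>\<zeta>\<in>Z. c \<zeta> * (\<Prod>\<eta>\<in>S. y \<zeta> (f \<eta>) - y \<eta> (f \<eta>)) * u \<zeta> \<mu>0) = 0"
  proof (intro sum.neutral ballI)
    fix \<zeta> assume "\<zeta> \<in> Z"
    then have "c \<zeta> = 0 \<or> (\<Prod>\<eta>\<in>S. y \<zeta> (f \<eta>) - y \<eta> (f \<eta>)) = 0"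
      using \<open>finite S\<close> by (cases "\<zeta> \<in> S") (auto simp: S_def intro: prod_zero)
    then show "c \<zeta> * (\<Prod>\<eta>\<in>S. y \<zeta> (f \<eta>) - y \<eta> (f \<eta>)) * u \<zeta> \<mu>0 = 0" by auto
  qed
  moreover have "(\<Sum>\<zeta>\<in>Z. c \<zeta> * (\<Prod>\<eta>\<in>S. y \<zeta> (f \<eta>) - y \<eta> (f \<eta>)) * u \<zeta> \<mu>0)
      = (\<Prod>\<eta>\<in>S. x (f \<eta>) - y \<eta> (f \<eta>)) * p \<mu>0"
    by (rule eigenvector_combination_prod[where s = "\<lambda>\<eta>. y \<eta> (f \<eta>)"])
       (fact u p span \<open>finite S\<close> fS \<mu>0(1))+
  moreover have "(\<Prod>\<eta>\<in>S. x (f \<eta>) - y \<eta> (f \<eta>)) * p \<mu>0 \<noteq> 0"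
    using f \<mu>0 \<open>finite S\<close> by (auto simp: prod_zero_iff) (metis f)
  ultimately show False by simp
qed

text \<open>The alternants \<open>a\<^sub>\<lambda>\<^sub>+\<^sub>\<delta>\<close>, as functions on the tuples of roots of \<open>z\<^sup>k\<^sup>+\<^sup>l = (-1)\<^sup>l\<^sup>-\<^sup>1\<close>,
  are orthogonal, so every function on diagrams is a combination of them.\<close>

lemma alternant_expansion:
  fixes k l :: nat and p :: "nat list \<Rightarrow> complex"
  defines "Z \<equiv> PiE {..<l} (\<lambda>_. {z. z ^ (k + l) = (-1) ^ (l - 1)})"
  assumes kl: "1 < k + l" and \<mu>: "\<mu> \<in> ydiag k l"
  shows "(\<Sum>\<zeta>\<in>Z. (\<Sum>L\<in>ydiag k l. p L * cnj (alternant l \<zeta> (shifted_parts l L)))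
           * alternant l \<zeta> (shifted_parts l \<mu>))
       = fact l * of_nat (k + l) ^ l * p \<mu>"
proof -
  have orth: "(\<Sum>\<zeta>\<in>Z. cnj (alternant l \<zeta> (shifted_parts l L)) * alternant l \<zeta> (shifted_parts l \<mu>))
      = (if L = \<mu> then fact l * of_nat (k + l) ^ l else 0)" if L: "L \<in> ydiag k l" for L
  proof -
    have "(\<forall>a<l. shifted_parts l L a = shifted_parts l \<mu> a) \<longleftrightarrow> L = \<mu>"
    proof
      assume "\<forall>a<l. shifted_parts l L a = shifted_parts l \<mu> a"
      then have "diagram_of_shifted l (shifted_parts l L) = diagram_of_shifted l (shifted_parts l \<mu>)"
        by (simp add: diagram_of_shifted_def)
      then show "L = \<mu>" using diagram_of_shifted_parts[OF L] diagram_of_shifted_parts[OF \<mu>] by simp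
    qed simp
    then show ?thesis
      unfolding Z_def using kl
      by (subst alternant_orthogonality[OF _ _ strict_antimono_shifted_parts[OF L] strict_antimono_shifted_parts[OF \<mu>]])
         (simp_all add: shifted_parts_less[OF L] shifted_parts_less[OF \<mu>] norm_power)
  qed
  have "(\<Sum>\<zeta>\<in>Z. (\<Sum>L\<in>ydiag k l. p L * cnj (alternant l \<zeta> (shifted_parts l L)))
           * alternant l \<zeta> (shifted_parts l \<mu>))
      = (\<Sum>L\<in>ydiag k l. p L
           * (\<Sum>\<zeta>\<in>Z. cnj (alternant l \<zeta> (shifted_parts l L)) * alternant l \<zeta> (shifted_parts l \<mu>)))"
    by (simp add: sum_distrib_left sum_distrib_right sum.swap[of _ Z] mult.assoc)
  also have "\<dots> = (\<Sum>L\<in>ydiag k l. if L = \<mu> then p L * (fact l * of_nat (k + l) ^ l) else 0)"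
    by (intro sum.cong refl) (simp add: orth)
  also have "\<dots> = fact l * of_nat (k + l) ^ l * p \<mu>" using \<mu> finite_ydiag by (simp add: mult.commute)
  finally show ?thesis .
qed

lemma spec_point_matching_roots:
  fixes p :: "nat list \<Rightarrow> complex"
  assumes k: "1 \<le> k" and l: "1 \<le> l" and p: "spec_point k l p"
  obtains \<zeta> where "\<And>b. b < l \<Longrightarrow> \<zeta> b ^ (k + l) = (-1) ^ (l - 1)"
    and "\<exists>L\<in>ydiag k l. alternant l \<zeta> (shifted_parts l L) \<noteq> 0"
    and "\<And>e. 1 \<le> e \<Longrightarrow> e \<le> k \<Longrightarrow> complete_hom l \<zeta> e = p (row_diagram l e)"
proof -
  define Z where "Z = PiE {..<l} (\<lambda>_. {z::complex. z ^ (k + l) = (-1) ^ (l - 1)})"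
  define u where "u \<zeta> L = alternant l \<zeta> (shifted_parts l L)" for \<zeta> :: "nat \<Rightarrow> complex" and L
  define C :: complex where "C = fact l * of_nat (k + l) ^ l"
  define c where "c \<zeta> = (\<Sum>L\<in>ydiag k l. p L * cnj (u \<zeta> L)) / C" for \<zeta>
  have C: "C \<noteq> 0" using k by (simp add: C_def del: of_nat_add)
  have finZ: "finite Z"
    unfolding Z_def using k by (intro finite_PiE finite_nth_roots) simp_all
  have Z_roots: "\<zeta> b ^ (k + l) = (-1) ^ (l - 1)" if "\<zeta> \<in> Z" "b < l" for \<zeta> b
    using that unfolding Z_def by auto
  have "\<exists>\<zeta>\<in>Z. c \<zeta> \<noteq> 0 \<and> (\<forall>e\<in>{1..k}. complete_hom l \<zeta> e = p (row_diagram l e))"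
  proof (rule eigenvector_in_span_of_eigenvectors[OF finZ])
    show "(\<Sum>M\<in>{M\<in>ydiag k l. pieri_coeff k l e L M}. u \<zeta> M) = complete_hom l \<zeta> e * u \<zeta> L"
      if "\<zeta> \<in> Z" "e \<in> {1..k}" "L \<in> ydiag k l" for \<zeta> e L
      unfolding u_def using that Z_roots l by (intro alternant_pieri) auto
    show "(\<Sum>M\<in>{M\<in>ydiag k l. pieri_coeff k l e L M}. p M) = p (row_diagram l e) * p L"
      if "e \<in> {1..k}" "L \<in> ydiag k l" for e L
      using spec_point_pieri[OF p l] that by simp
    show "(\<Sum>\<zeta>\<in>Z. c \<zeta> * u \<zeta> \<mu>) = p \<mu>" if "\<mu> \<in> ydiag k l" for \<mu>
      using alternant_expansion[of k l \<mu> p] that k l C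
      unfolding Z_def c_def u_def C_def by (simp add: sum_divide_distrib[symmetric] field_simps)
    show "replicate l 0 \<in> ydiag k l" "p (replicate l 0) \<noteq> 0"
      using replicate_0_ydiag spec_point_empty[OF p] by simp_all
  qed
  then obtain \<zeta> where \<zeta>: "\<zeta> \<in> Z" "c \<zeta> \<noteq> 0"
    and h: "\<forall>e\<in>{1..k}. complete_hom l \<zeta> e = p (row_diagram l e)"
    by blast
  from \<zeta>(2) have "\<exists>L\<in>ydiag k l. u \<zeta> L \<noteq> 0"
    by (auto simp: c_def intro: sum.neutral)
  then show ?thesis
    by (intro that[of \<zeta>]) (use Z_roots[OF \<zeta>(1)] h in \<open>auto simp: u_def\<close>)
qed

lemma spec_point_alternant_multiple:
  fixes p :: "nat list \<Rightarrow> complex"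
  assumes l: "1 \<le> l" and p: "spec_point k l p"
    and roots: "\<And>b. b < l \<Longrightarrow> \<zeta> b ^ (k + l) = (-1) ^ (l - 1)"
    and h: "\<And>e. 1 \<le> e \<Longrightarrow> e \<le> k \<Longrightarrow> complete_hom l \<zeta> e = p (row_diagram l e)"
    and L: "L \<in> ydiag k l"
  shows "alternant l \<zeta> (shifted_parts l L) = alternant l \<zeta> (shifted_parts l (replicate l 0)) * p L"
proof -
  let ?u = "\<lambda>L. alternant l \<zeta> (shifted_parts l L)"
  have "?u L - ?u (replicate l 0) * p L = 0"
  proof (rule pieri_eigenvector_eq_0[OF l _ _ L])
    fix e M assume "1 \<le> e" "e \<le> k" "M \<in> ydiag k l"
    then show "(\<Sum>N\<in>{N\<in>ydiag k l. pieri_coeff k l e M N}. ?u N - ?u (replicate l 0) * p N)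
        = p (row_diagram l e) * (?u M - ?u (replicate l 0) * p M)"
      using alternant_pieri[OF l _ _ roots, of M e] spec_point_pieri[OF p l, of e M] h
      unfolding sum_subtractf sum_distrib_left[symmetric] by (simp add: algebra_simps)
  qed (use spec_point_empty[OF p] in simp)
  then show ?thesis by simp
qed

lemma spec_point_normalised_alternant:
  fixes p :: "nat list \<Rightarrow> complex"
  assumes k: "1 \<le> k" and l: "1 \<le> l" and p: "spec_point k l p"
  obtains \<zeta> where "\<And>b. b < l \<Longrightarrow> \<zeta> b ^ (k + l) = (-1) ^ (l - 1)"
    and "alternant l \<zeta> (shifted_parts l (replicate l 0)) \<noteq> 0"
    and "\<And>L. L \<in> ydiag k l \<Longrightarrow>
      p L = alternant l \<zeta> (shifted_parts l L) / alternant l \<zeta> (shifted_parts l (replicate l 0))"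
proof -
  obtain \<zeta> where roots: "\<And>b. b < l \<Longrightarrow> \<zeta> b ^ (k + l) = (-1) ^ (l - 1)"
    and nonzero: "\<exists>L\<in>ydiag k l. alternant l \<zeta> (shifted_parts l L) \<noteq> 0"
    and h: "\<And>e. 1 \<le> e \<Longrightarrow> e \<le> k \<Longrightarrow> complete_hom l \<zeta> e = p (row_diagram l e)"
    using spec_point_matching_roots[OF k l p] by blast
  note multiple = spec_point_alternant_multiple[OF l p roots h]
  then have "alternant l \<zeta> (shifted_parts l (replicate l 0)) \<noteq> 0" using nonzero by force
  then show ?thesis using that[OF roots] multiple by simp
qed

section \<open>The involution is complex conjugation\<close>

definition reverse_perm :: "nat \<Rightarrow> nat \<Rightarrow> nat" where
  "reverse_perm l i = (if i < l then l - 1 - i else i)"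

lemma reverse_perm_permutes: "reverse_perm l permutes {..<l}"
proof -
  have "bij_betw (reverse_perm l) {..<l} {..<l}"
    by (rule bij_betw_byWitness[where f'="reverse_perm l"]) (auto simp: reverse_perm_def)
  moreover have "\<And>x. x \<notin> {..<l} \<Longrightarrow> reverse_perm l x = x" by (simp add: reverse_perm_def)
  ultimately show ?thesis by (rule bij_imp_permutes)
qed

definition bar_perm :: "nat \<Rightarrow> nat \<Rightarrow> nat \<Rightarrow> nat" where
  "bar_perm l d = reverse_perm l \<circ> (cyclic_shift l ^^ d)"

lemma bar_perm_permutes: "1 \<le> l \<Longrightarrow> bar_perm l d permutes {..<l}"
  unfolding bar_perm_def
  by (intro permutes_compose permutes_funpow cyclic_shift_permutes reverse_perm_permutes)

lemma bar_perm_eq: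
  assumes "d \<le> l" "j < l"
  shows "bar_perm l d j = (if j < d then d - 1 - j else l - 1 - j + d)"
  using cyclic_shift_funpow[OF assms] assms by (auto simp: bar_perm_def reverse_perm_def)

lemma sign_bar_perm:
  assumes l: "1 \<le> l"
  shows "sign (bar_perm l d) = sign (reverse_perm l) * (-1) ^ ((l - 1) * d)"
  unfolding bar_perm_def
  using reverse_perm_permutes permutes_funpow[OF cyclic_shift_permutes[OF l]] sign_cyclic_shift_funpow[OF l]
  by (subst sign_compose) (auto intro: permutes_imp_permutation)

lemma durfee_le: "durfee l L \<le> l"
  unfolding durfee_def by (auto intro: Max.boundedI)

lemma less_durfee_iff:
  assumes L: "L \<in> ydiag k l" and a: "a < l"
  shows "a < durfee l L \<longleftrightarrow> a + 1 \<le> L ! a"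
proof -
  define S where "S = {i\<in>{1..l}. i \<le> L ! (i - 1)}"
  have "finite S" by (simp add: S_def)
  have down: "j \<in> S" if "i \<in> S" "1 \<le> j" "j \<le> i" for i j
  proof -
    have "i \<le> L ! (i - 1)" "i - 1 < l" using that by (auto simp: S_def)
    moreover have "L ! (i - 1) \<le> L ! (j - 1)" using ydiagD(2)[OF L, of "j - 1" "i - 1"] that calculation by simp
    ultimately show ?thesis using that by (simp add: S_def)
  qed
  have durfee: "durfee l L = (if S = {} then 0 else Max S)"
    unfolding durfee_def S_def by auto
  show ?thesis
  proof
    assume "a < durfee l L"
    then have "S \<noteq> {}" "a + 1 \<le> Max S" using durfee by (auto split: if_splits)
    then have "a + 1 \<in> S" using down[OF Max_in[OF \<open>finite S\<close>]] by simp
    then show "a + 1 \<le> L ! a" by (simp add: S_def)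
  next
    assume "a + 1 \<le> L ! a"
    then have "a + 1 \<in> S" using a by (simp add: S_def)
    then show "a < durfee l L" using durfee \<open>finite S\<close> by (auto dest: Max_ge)
  qed
qed

lemma prod_lessThan_if_less: "(\<Prod>a<m. if a < d then c else 1) = (c::'a::comm_monoid_mult) ^ min d m"
proof (induction m)
  case 0 then show ?case by simp
next
  case (Suc m)
  show ?case
  proof (cases "m < d")
    case True
    then have "min d (Suc m) = Suc (min d m)" by simp
    then show ?thesis using Suc True by (simp add: power_Suc2)
  next
    case False
    then have "min d (Suc m) = min d m" by simp
    then show ?thesis using Suc False by simp
  qed
qed

text \<open>With \<open>d\<close> the Durfee number of \<open>\<lambda>\<close> and \<open>q = \<lambda> + \<delta>\<close>, the exponents \<open>r a\<close> below satisfy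
  \<open>r a + q a = n + l - 1\<close> for \<open>a < d\<close> and \<open>r a + q a = l - 1\<close> otherwise, so that
  \<open>\<zeta> ^ r a = \<zeta> ^ (l - 1) * cnj \<zeta> ^ q a\<close> up to a factor \<open>\<zeta> ^ n\<close> when \<open>\<zeta>\<close> is unimodular.
  Sorted decreasingly by \<open>bar_perm\<close>, they are the shifted parts of \<open>\<overline>\<lambda>\<close>.\<close>

definition bar_exponent :: "nat \<Rightarrow> nat \<Rightarrow> nat list \<Rightarrow> nat \<Rightarrow> nat" where
  "bar_exponent k l L a = (if a < durfee l L then (k + l) - L ! a + a else a - L ! a)"

definition bar_shifted :: "nat \<Rightarrow> nat \<Rightarrow> nat list \<Rightarrow> nat \<Rightarrow> nat" where
  "bar_shifted k l L j = bar_exponent k l L (bar_perm l (durfee l L) j)"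

context
  fixes k l :: nat and L :: "nat list"
  assumes l: "1 \<le> l" and L: "L \<in> ydiag k l"
begin

lemma ydiag_nth_le_durfee:
  assumes "a < l" "durfee l L \<le> a"
  shows "L ! a \<le> durfee l L"
proof -
  have "\<not> durfee l L + 1 \<le> L ! (durfee l L)" using less_durfee_iff[OF L, of "durfee l L"] assms by simp
  moreover have "L ! a \<le> L ! (durfee l L)" using ydiagD(2)[OF L] assms by simp
  ultimately show ?thesis by simp
qed

lemma bar_shifted_eq:
  assumes j: "j < l"
  shows "bar_shifted k l L j = (let d = durfee l L in
    if j < d then (k + l) - L ! (d - 1 - j) + (d - 1 - j) else (l - 1 - j + d) - L ! (l - 1 - j + d))"
proof -
  let ?d = "durfee l L"
  have "bar_perm l ?d j = (if j < ?d then ?d - 1 - j else l - 1 - j + ?d)"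
    using bar_perm_eq[OF durfee_le j] .
  then show ?thesis by (simp add: bar_shifted_def bar_exponent_def Let_def)
qed

lemma strict_antimono_bar_shifted: "strict_antimono_on {..<l} (bar_shifted k l L)"
  unfolding strict_antimono_on_lessThan_iff
proof (intro allI impI)
  fix j assume j: "Suc j < l"
  define d where "d = durfee l L"
  have d: "d \<le> l" by (simp add: d_def durfee_le[of l L])
  have high: "l \<le> bar_shifted k l L i" if "i < d" for i
  proof -
    have "d - 1 - i < l" using that d by simp
    then have "L ! (d - 1 - i) \<le> k" by (rule ydiagD(3)[OF L])
    then show ?thesis using bar_shifted_eq[of i] that d by (simp add: d_def Let_def)
  qed
  have low: "bar_shifted k l L i \<le> l - 1" if "d \<le> i" "i < l" for i
    using bar_shifted_eq[of i] that by (simp add: d_def Let_def)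
  consider "Suc j < d" | "j < d" "d \<le> Suc j" | "d \<le> j" by linarith
  then show "bar_shifted k l L (Suc j) < bar_shifted k l L j"
  proof cases
    case 1
    have "L ! (d - 1 - j) \<le> L ! (d - 1 - Suc j)" "L ! (d - 1 - Suc j) \<le> k"
      using ydiagD(2)[OF L, of "d - 1 - Suc j" "d - 1 - j"] ydiagD(3)[OF L, of "d - 1 - Suc j"] 1 d j
      by simp_all
    then have "(k + l) - L ! (d - 1 - Suc j) \<le> (k + l) - L ! (d - 1 - j)" by (intro diff_le_mono2)
    moreover have "d - 1 - Suc j < d - 1 - j" using 1 by simp
    moreover have "bar_shifted k l L j = (k + l) - L ! (d - 1 - j) + (d - 1 - j)"
      "bar_shifted k l L (Suc j) = (k + l) - L ! (d - 1 - Suc j) + (d - 1 - Suc j)"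
      using bar_shifted_eq[of j] bar_shifted_eq[of "Suc j"] 1 j by (simp_all add: d_def Let_def)
    ultimately show ?thesis by (simp only: add_le_less_mono)
  next
    case 2
    then show ?thesis using high[of j] low[of "Suc j"] j l by simp
  next
    case 3
    let ?a = "l - 1 - j + d" and ?b = "l - 1 - Suc j + d"
    have ab: "?a = Suc ?b" using j 3 by simp
    have "L ! ?a \<le> L ! ?b" using ydiagD(2)[OF L, of ?b ?a] ab j 3 by simp
    moreover have "?b < l" "d \<le> ?b" using j 3 by arith+
    then have "L ! ?b \<le> ?b" using ydiag_nth_le_durfee[of ?b] by (simp add: d_def)
    ultimately have "?b - L ! ?b < ?a - L ! ?a" unfolding ab by arith
    moreover have "bar_shifted k l L j = ?a - L ! ?a" "bar_shifted k l L (Suc j) = ?b - L ! ?b"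
      using bar_shifted_eq[of j] bar_shifted_eq[of "Suc j"] 3 j by (simp_all add: d_def Let_def)
    ultimately show ?thesis by (simp only:)
  qed
qed

lemma bar_shifted_0_less: "bar_shifted k l L 0 < k + l"
proof (cases "0 < durfee l L")
  case True
  have "durfee l L \<le> L ! (durfee l L - 1)" using less_durfee_iff[OF L, of "durfee l L - 1"] True durfee_le[of l L] by simp
  moreover have "L ! (durfee l L - 1) \<le> k" using ydiagD(3)[OF L, of "durfee l L - 1"] True durfee_le[of l L] by simp
  ultimately show ?thesis using bar_shifted_eq[of 0] True l by (simp add: Let_def)
next
  case False
  then show ?thesis using bar_shifted_eq[of 0] l by (simp add: Let_def)
qed

lemma bar_diag_eq_diagram_of_shifted: "bar_diag k l L = diagram_of_shifted l (bar_shifted k l L)"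
proof (rule nth_equalityI)
  let ?d = "durfee l L"
  show "length (bar_diag k l L) = length (diagram_of_shifted l (bar_shifted k l L))"
    by (simp add: bar_diag_def diagram_of_shifted_def Let_def del: upt_Suc)
  fix j assume "j < length (bar_diag k l L)"
  then have j: "j < l" by (simp add: bar_diag_def Let_def del: upt_Suc)
  have b: "bar_diag k l L ! j
      = (if j + 1 \<le> ?d then ?d + k - L ! (?d - (j + 1)) else ?d - L ! (l - (j + 1) + ?d))"
    using j by (simp add: bar_diag_def Let_def del: upt_Suc)
  show "bar_diag k l L ! j = diagram_of_shifted l (bar_shifted k l L) ! j"
  proof (cases "j < ?d")
    case True
    have "L ! (?d - 1 - j) \<le> k" using ydiagD(3)[OF L, of "?d - 1 - j"] True durfee_le[of l L] by simp
    then show ?thesis using b True bar_shifted_eq[OF j] j by (simp add: diagram_of_shifted_def Let_def)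
  next
    case False
    have "L ! (l - 1 - j + ?d) \<le> ?d" using ydiag_nth_le_durfee[of "l - 1 - j + ?d"] j False by simp
    moreover have "l - (j + 1) + ?d = l - 1 - j + ?d" by simp
    ultimately show ?thesis using b False bar_shifted_eq[OF j] j by (simp add: diagram_of_shifted_def Let_def)
  qed
qed

lemma bar_diag_ydiag: "bar_diag k l L \<in> ydiag k l"
  unfolding bar_diag_eq_diagram_of_shifted by (rule diagram_of_shifted_ydiag[OF strict_antimono_bar_shifted bar_shifted_0_less l])

lemma shifted_parts_bar_diag: "j < l \<Longrightarrow> shifted_parts l (bar_diag k l L) j = bar_shifted k l L j"
  unfolding bar_diag_eq_diagram_of_shifted by (rule shifted_parts_diagram_of[OF strict_antimono_bar_shifted])

lemma alternant_bar_exponent: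
  fixes \<zeta> :: "nat \<Rightarrow> complex"
  assumes roots: "\<And>b. b < l \<Longrightarrow> \<zeta> b ^ (k + l) = \<epsilon>"
    and unimodular: "\<And>b. b < l \<Longrightarrow> cnj (\<zeta> b) * \<zeta> b = 1"
  shows "alternant l \<zeta> (bar_exponent k l L)
       = \<epsilon> ^ durfee l L * (\<Prod>b<l. \<zeta> b ^ (l - 1)) * cnj (alternant l \<zeta> (shifted_parts l L))"
proof -
  let ?d = "durfee l L" and ?q = "shifted_parts l L" and ?r = "bar_exponent k l L"
  have "alternant l \<zeta> ?r
      = leibniz_det l (\<lambda>a b. (if a < ?d then \<epsilon> else 1) * (\<zeta> b ^ (l - 1) * cnj (\<zeta> b) ^ ?q a))"
    unfolding alternant_def
  proof (rule leibniz_det_cong)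
    fix a b assume a: "a < l" and b: "b < l"
    have "\<zeta> b ^ ?r a = \<zeta> b ^ ?r a * (cnj (\<zeta> b) * \<zeta> b) ^ ?q a" using unimodular[OF b] by simp
    then have key: "\<zeta> b ^ ?r a = \<zeta> b ^ (?r a + ?q a) * cnj (\<zeta> b) ^ ?q a"
      by (simp add: power_mult_distrib power_add mult_ac)
    show "\<zeta> b ^ ?r a = (if a < ?d then \<epsilon> else 1) * (\<zeta> b ^ (l - 1) * cnj (\<zeta> b) ^ ?q a)"
    proof (cases "a < ?d")
      case True
      then have "?r a + ?q a = (k + l) + (l - 1)"
        using ydiagD(3)[OF L a] a by (simp add: bar_exponent_def shifted_parts_def)
      then show ?thesis using key True roots[OF b] by (simp add: power_add)
    next
      case False
      then have "?r a + ?q a = l - 1"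
        using less_durfee_iff[OF L a] a by (simp add: bar_exponent_def shifted_parts_def)
      then show ?thesis using key False by simp
    qed
  qed
  also have "\<dots> = (\<Prod>a<l. if a < ?d then \<epsilon> else 1) * (\<Prod>b<l. \<zeta> b ^ (l - 1))
      * leibniz_det l (\<lambda>a b. cnj (\<zeta> b) ^ ?q a)"
    by (simp add: leibniz_det_scale_rows leibniz_det_scale_cols[symmetric] mult.assoc)
  also have "(\<Prod>a<l. if a < ?d then \<epsilon> else 1) = \<epsilon> ^ ?d"
    using prod_lessThan_if_less[where m = l and d = ?d and c = \<epsilon>] durfee_le[of l L] by simp
  also have "leibniz_det l (\<lambda>a b. cnj (\<zeta> b) ^ ?q a) = cnj (alternant l \<zeta> ?q)"
    by (simp add: alternant_def leibniz_det_def)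
  finally show ?thesis .
qed

lemma alternant_bar_diag:
  fixes \<zeta> :: "nat \<Rightarrow> complex"
  assumes roots: "\<And>b. b < l \<Longrightarrow> \<zeta> b ^ (k + l) = (-1) ^ (l - 1)"
    and unimodular: "\<And>b. b < l \<Longrightarrow> cnj (\<zeta> b) * \<zeta> b = 1"
  shows "alternant l \<zeta> (shifted_parts l (bar_diag k l L))
       = of_int (sign (reverse_perm l)) * (\<Prod>b<l. \<zeta> b ^ (l - 1)) * cnj (alternant l \<zeta> (shifted_parts l L))"
proof -
  let ?d = "durfee l L"
  have signs: "(-1) ^ ((l - 1) * ?d) * ((-1) ^ (l - 1)) ^ ?d = (1::complex)"
    by (simp add: power_mult[symmetric] power_add[symmetric] mult_2[symmetric])
  have "alternant l \<zeta> (shifted_parts l (bar_diag k l L)) = alternant l \<zeta> (bar_shifted k l L)"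
    by (rule alternant_cong) (rule shifted_parts_bar_diag)
  also have "\<dots> = leibniz_det l (\<lambda>a b. \<zeta> b ^ bar_exponent k l L (bar_perm l ?d a))"
    by (simp add: alternant_def bar_shifted_def)
  also have "\<dots> = of_int (sign (bar_perm l ?d)) * alternant l \<zeta> (bar_exponent k l L)"
    unfolding alternant_def
    by (rule leibniz_det_permute_rows[OF bar_perm_permutes[OF l], of "\<lambda>a b. \<zeta> b ^ bar_exponent k l L a"])
  also have "\<dots> = of_int (sign (reverse_perm l)) * ((-1) ^ ((l - 1) * ?d) * ((-1) ^ (l - 1)) ^ ?d)
      * (\<Prod>b<l. \<zeta> b ^ (l - 1)) * cnj (alternant l \<zeta> (shifted_parts l L))"
    by (simp add: alternant_bar_exponent[OF roots unimodular] sign_bar_perm[OF l] mult_ac)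
  also have "\<dots> = of_int (sign (reverse_perm l)) * (\<Prod>b<l. \<zeta> b ^ (l - 1)) * cnj (alternant l \<zeta> (shifted_parts l L))"
    by (simp only: signs mult_1_right)
  finally show ?thesis .
qed

end

lemma bar_diag_replicate_0: "bar_diag k l (replicate l 0) = replicate l 0"
proof -
  have "durfee l (replicate l 0) = 0" by (auto simp: durfee_def)
  then show ?thesis
    by (intro nth_equalityI) (auto simp: bar_diag_def Let_def simp del: upt_Suc)
qed

lemma spec_point_bar_diag:
  assumes k: "1 \<le> k" and l: "1 \<le> l" and p: "spec_point k l p" and L: "L \<in> ydiag k l"
  shows "p (bar_diag k l L) = cnj (p L)"
proof -
  let ?o = "replicate l 0"
  obtain \<zeta> where roots: "\<And>b. b < l \<Longrightarrow> \<zeta> b ^ (k + l) = (-1) ^ (l - 1)"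
    and a0: "alternant l \<zeta> (shifted_parts l ?o) \<noteq> 0"
    and p_eq: "\<And>M. M \<in> ydiag k l \<Longrightarrow>
      p M = alternant l \<zeta> (shifted_parts l M) / alternant l \<zeta> (shifted_parts l ?o)"
    using spec_point_normalised_alternant[OF k l p] by blast
  define K where "K = of_int (sign (reverse_perm l)) * (\<Prod>b<l. \<zeta> b ^ (l - 1))"
  have "cnj (\<zeta> b) * \<zeta> b = 1" if "b < l" for b
    using cnj_mult_nth_root[of "k + l" "(-1) ^ (l - 1)"] roots[OF that] k l by (simp add: norm_power)
  then have bar: "alternant l \<zeta> (shifted_parts l (bar_diag k l M)) = K * cnj (alternant l \<zeta> (shifted_parts l M))"
    if "M \<in> ydiag k l" for M
    using alternant_bar_diag[OF l that roots] by (simp add: K_def)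
  have K_a0: "alternant l \<zeta> (shifted_parts l ?o) = K * cnj (alternant l \<zeta> (shifted_parts l ?o))"
    using bar[OF replicate_0_ydiag] by (simp add: bar_diag_replicate_0)
  then have "K \<noteq> 0" using a0 by auto
  have "p (bar_diag k l L) = K * cnj (alternant l \<zeta> (shifted_parts l L)) / alternant l \<zeta> (shifted_parts l ?o)"
    using p_eq[OF bar_diag_ydiag[OF l L]] bar[OF L] by simp
  also have "\<dots> = K * cnj (alternant l \<zeta> (shifted_parts l L)) / (K * cnj (alternant l \<zeta> (shifted_parts l ?o)))"
    by (subst K_a0[symmetric]) (rule refl)
  also have "\<dots> = cnj (alternant l \<zeta> (shifted_parts l L) / alternant l \<zeta> (shifted_parts l ?o))"
    using \<open>K \<noteq> 0\<close> by simp
  also have "\<dots> = cnj (p L)" using p_eq[OF L] by simp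
  finally show ?thesis .
qed

lemma evalpt_qbar:
  assumes l: "1 \<le> l"
  shows "evalpt k l p (of_int \<circ> qbar k l X) = (\<Sum>L\<in>ydiag k l. of_int (X L) * p (bar_diag k l L))"
proof -
  have "evalpt k l p (of_int \<circ> qbar k l X)
      = (\<Sum>\<mu>\<in>ydiag k l. \<Sum>L\<in>{L\<in>ydiag k l. bar_diag k l L = \<mu>}. of_int (X L) * p (bar_diag k l L))"
    unfolding evalpt_def qbar_def by (simp add: sum_distrib_right)
  also have "\<dots> = (\<Sum>L\<in>ydiag k l. of_int (X L) * p (bar_diag k l L))"
    using bar_diag_ydiag[OF l] finite_ydiag by (intro sum.group) auto
  finally show ?thesis .
qed

theorem mainTheorem10:
  fixes k n :: nat and X :: "nat list \<Rightarrow> int" and p :: "nat list \<Rightarrow> complex"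
  assumes "0 < k" and "k < n"
    and "supported k (n - k) X"
    and "spec_point k (n - k) p"
  shows "evalpt k (n - k) p (of_int \<circ> qbar k (n - k) X)
         = cnj (evalpt k (n - k) p (of_int \<circ> X))"
proof -
  \<comment> \<open>both sides only involve the values of \<open>X\<close> on diagrams, so \<open>supported\<close> is not needed\<close>
  define l where "l = n - k"
  have k: "1 \<le> k" and l: "1 \<le> l" using assms(1,2) by (simp_all add: l_def)
  have p: "spec_point k l p" using assms(4) by (simp add: l_def)
  have "evalpt k l p (of_int \<circ> qbar k l X) = (\<Sum>L\<in>ydiag k l. of_int (X L) * cnj (p L))"
    by (simp add: evalpt_qbar[OF l] spec_point_bar_diag[OF k l p])
  also have "\<dots> = cnj (evalpt k l p (of_int \<circ> X))" by (simp add: evalpt_def)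
  finally show ?thesis by (simp add: l_def)
qed

end
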